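(* For every finite regular matroid $\mathcal M$ (with a fixed totally unimodular representing matrix $M$), the face poset $\mathcal{FP}(\mathcal M)$ of the Voronoi cell $V_0$ of the lattice of integer flows $\Lambda(\mathcal M)$ is isomorphic, as a graded poset, to the poset $\mathcal{SC}(\mathcal M)$ of strongly connected orientations of submatroids of $\mathcal M$. More precisely, there is an order-preserving bijection $\phi:\mathcal{FP}(\mathcal M)\to\mathcal{SC}(\mathcal M)$ such that every face $F$ satisfies $\operatorname{codim}(F)=\operatorname{genus}(\phi(F))$, equivalently $\dim F=\operatorname{genus}(\mathcal M)-\operatorname{genus}(\phi(F))$.
   Context: Let $\mathcal M$ be a regular matroid on a finite ground set $E$, represented over $\mathbb R$ by a totally unimodular (TU) matrix $M$ (every square submatrix has determinant in $\{-1,0,1\}$) whose columns $c_e$ are indexed by $e\in E$. Identify $\mathbb R^E$ with standard basis $\{e\}_{e\in E}$, Euclidean inner product $\langle\cdot,\cdot\rangle$ and norm $\|\cdot\|$. Let $\mathcal F=\mathcal F(\mathcal M)=\ker M\subseteq\mathbb R^E$ (real flows) and $\Lambda=\Lambda(\mathcal M)=\ker M\cap\mathbb Z^E$ (integer flows). For $x\in\mathbb R^E$ write $x_e=\langle x,e\rangle$ and $\operatorname{supp}(x)=\{e: x_e\neq 0\}$. $\operatorname{genus}(\mathcal M)=\dim\mathcal F$. The Voronoi cell of $\lambda\in\Lambda$ is $V_\lambda=\{x\in\mathcal F:\|x-\lambda\|\le\|x-\mu\|\ \forall\mu\in\Lambda\}$. $\mathcal{FP}(\mathcal M)$ is the set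 of nonempty faces of the polytope $V_0$ ordered by inclusion, graded by dimension; codimension is taken in $\mathcal F$. An oriented submatroid is a pair $(S,\varepsilon)$ with $S\subseteq E$ and $\varepsilon:S\to\{\pm1\}$. It is strongly connected if for every $e\in S$ there is $w\in\mathbb Z_{\ge0}^S$ with $w_e\ge1$ and $\sum_{f\in S}w_f\varepsilon_f c_f=0$ (i.e. every element lies in a positive integer flow of the reoriented submatrix). The genus of $(S,\varepsilon)$ is the dimension of the kernel of the submatrix $M_S$ of $M$ formed by the columns indexed by $S$. $\mathcal{SC}(\mathcal M)$ is the set of strongly connected oriented submatroids (including $(\emptyset,\emptyset)$), ordered by $(S,\varepsilon)\le(S',\varepsilon')$ iff $S'\subseteq S$ and $\varepsilon'=\varepsilon|_{S'}$. *)

theory Defs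
  imports "HOL-Analysis.Analysis"
begin

text \<open>Ground set E = UNIV :: 'e set (finite type), rows indexed by a finite type 'r.
  A matrix is M :: real^'e^'r; the column indexed by e is column e M.\<close>

definition sub_det :: "real^'e^'r \<Rightarrow> nat \<Rightarrow> (nat \<Rightarrow> 'r) \<Rightarrow> (nat \<Rightarrow> 'e) \<Rightarrow> real" where
  "sub_det M k f g =
     (\<Sum>p | p permutes {..<k}. of_int (sign p) * (\<Prod>i<k. M $ f i $ g (p i)))"

definition totally_unimodular :: "real^'e^'r \<Rightarrow> bool" where
  "totally_unimodular M \<longleftrightarrow>
     (\<forall>k f g. inj_on f {..<k} \<and> inj_on g {..<k} \<longrightarrow> sub_det M k f g \<in> {-1, 0, 1})"

definition real_flows :: "real^'e^'r \<Rightarrow> (real^'e) set" where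
  "real_flows M = {x. M *v x = 0}"

definition integer_flows :: "real^'e^'r \<Rightarrow> (real^'e) set" where
  "integer_flows M = {x \<in> real_flows M. \<forall>e. x $ e \<in> \<int>}"

definition voronoi_cell :: "real^'e^'r \<Rightarrow> real^'e \<Rightarrow> (real^'e) set" where
  "voronoi_cell M l = {x \<in> real_flows M. \<forall>\<mu>\<in>integer_flows M. norm (x - l) \<le> norm (x - \<mu>)}"

definition genus :: "real^'e^'r \<Rightarrow> nat" where
  "genus M = dim (real_flows M)"

definition face_poset :: "real^'e^'r \<Rightarrow> (real^'e) set set" where
  "face_poset M = {F. F face_of voronoi_cell M 0 \<and> F \<noteq> {}}"

definition oriented_submatroid :: "('e set \<times> ('e \<Rightarrow> int)) \<Rightarrow> bool" where
  "oriented_submatroid Se \<longleftrightarrow>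
     (\<forall>e\<in>fst Se. snd Se e \<in> {-1, 1}) \<and> (\<forall>e. e \<notin> fst Se \<longrightarrow> snd Se e = 0)"

definition strongly_connected :: "real^'e^'r \<Rightarrow> ('e set \<times> ('e \<Rightarrow> int)) \<Rightarrow> bool" where
  "strongly_connected M Se \<longleftrightarrow>
     (\<forall>e\<in>fst Se. \<exists>w :: 'e \<Rightarrow> int. (\<forall>f\<in>fst Se. w f \<ge> 0) \<and> w e \<ge> 1 \<and>
        (\<Sum>f\<in>fst Se. (of_int (w f * snd Se f)) *\<^sub>R column f M) = 0)"

definition SC :: "real^'e^'r \<Rightarrow> ('e set \<times> ('e \<Rightarrow> int)) set" where
  "SC M = {Se. oriented_submatroid Se \<and> strongly_connected M Se}"

definition sc_le :: "('e set \<times> ('e \<Rightarrow> int)) \<Rightarrow> ('e set \<times> ('e \<Rightarrow> int)) \<Rightarrow> bool" where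
  "sc_le Se Se' \<longleftrightarrow> fst Se' \<subseteq> fst Se \<and> (\<forall>e\<in>fst Se'. snd Se' e = snd Se e)"

text \<open>Genus of (S, eps): dimension of the kernel of the column submatrix M_S,
  realised as the flows of M supported in S.\<close>

definition sub_genus :: "real^'e^'r \<Rightarrow> ('e set \<times> ('e \<Rightarrow> int)) \<Rightarrow> nat" where
  "sub_genus M Se = dim {x. M *v x = 0 \<and> (\<forall>e. e \<notin> fst Se \<longrightarrow> x $ e = 0)}"

end

theory Submission
  imports Defs "Jordan_Normal_Form.Determinant"
begin

text \<open>
  For x in the Voronoi cell V of 0 call the integer flows l with |x - l| = |x| the nearest flows
  of x. Total unimodularity lets every integer flow be peeled into signed circuits conformal to it.
  Hence the only Voronoi-relevant vectors are {0, 1, -1}-flows, two nearest flows never traverse an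
  element in opposite directions, and the nearest flows of x orient their joint support S by some
  \<epsilon>. A linear-programming argument shows that they are exactly the integer flows with entries in
  {0, \<epsilon> e}, and that they span the flow space of S.

  A face F of V is determined by the nearest flows of a relative interior point x and is sent to
  (S, \<epsilon>). Near x the face is the affine space through x orthogonal to these flows, so the
  codimension of F is the genus of (S, \<epsilon>). The pairs that arise are exactly the strongly connected
  ones: each nearest flow is a positive flow of (S, \<epsilon>), and conversely for strongly connected
  (S, \<epsilon>) the projection of \<epsilon>/2 to the flow space has the \<epsilon>-oriented unit flows as nearest flows.
\<close>

section \<open>Signed circuits of totally unimodular matrices\<close>

(* Jordan_Normal_Form also writes vector indexing as $; keep the notation of finite Cartesian products. *)
no_notation Matrix.vec_index (infixl \<open>$\<close> 100)

lemma det_mat_cramer: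
  fixes A :: "nat \<Rightarrow> nat \<Rightarrow> real"
  assumes "\<forall>i<k. (\<Sum>j<k. A i j * x j) = b i" and "j < k"
  shows "det (mat k k (\<lambda>(i,l). if l = j then b i else A i l)) = x j * det (mat k k (\<lambda>(i,j). A i j))"
proof -
  let ?A = "mat k k (\<lambda>(i,j). A i j)"
  have "?A *\<^sub>v vec k x = vec k b"
    using assms(1) by (auto simp: scalar_prod_def Matrix.row_def atLeast0LessThan)
  hence "replace_col ?A (?A *\<^sub>v vec k x) j = mat k k (\<lambda>(i,l). if l = j then b i else A i l)"
    by (auto simp: replace_col_def)
  with cramer_lemma_mat[of ?A k "vec k x" j] assms(2) show ?thesis
    by simp
qed

lemma det_mat_nonzero:
  fixes A :: "nat \<Rightarrow> nat \<Rightarrow> real"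
  assumes "\<And>v. \<forall>j<k. (\<Sum>i<k. v i * A i j) = 0 \<Longrightarrow> \<forall>i<k. v i = 0"
  shows "det (mat k k (\<lambda>(i,j). A i j)) \<noteq> 0"
proof
  let ?A = "mat k k (\<lambda>(i,j). A i j)"
  assume "det ?A = 0"
  hence "det ?A\<^sup>T = 0" using det_transpose[of ?A k] by simp
  then obtain v where v: "v \<in> carrier_vec k" "v \<noteq> 0\<^sub>v k" "?A\<^sup>T *\<^sub>v v = 0\<^sub>v k"
    using det_0_iff_vec_prod_zero[of "?A\<^sup>T" k] by auto
  have "\<forall>j<k. (\<Sum>i<k. vec_index v i * A i j) = 0"
  proof (intro allI impI)
    fix j assume j: "j < k"
    have "vec_index (?A\<^sup>T *\<^sub>v v) j = 0" using v(3) j by simp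
    thus "(\<Sum>i<k. vec_index v i * A i j) = 0" using j v(1)
      by (simp add: scalar_prod_def Matrix.row_def atLeast0LessThan mult.commute)
  qed
  hence "v = 0\<^sub>v k" using assms v(1) by (intro eq_vecI) auto
  with v(2) show False by simp
qed

lemma sub_det_eq_det: "sub_det M k f g = det (mat k k (\<lambda>(i,j). M $ f i $ g j))"
  unfolding sub_det_def det_def by (simp add: atLeast0LessThan)

definition vec_support :: "real^'e \<Rightarrow> 'e set" where
  "vec_support x = {e. x $ e \<noteq> 0}"

lemma matrix_vector_mult_support: "(M *v w) $ r = (\<Sum>e\<in>vec_support w. M $ r $ e * w $ e)"
  unfolding matrix_vector_mult_def vec_support_def by (auto intro: sum.mono_neutral_right)

definition independent_columns :: "real^'e^'r \<Rightarrow> 'e set \<Rightarrow> bool" where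
  "independent_columns M B \<longleftrightarrow> (\<forall>v. M *v v = 0 \<and> (\<forall>e. e \<notin> B \<longrightarrow> v $ e = 0) \<longrightarrow> v = 0)"

lemma span_restricted_rows:
  fixes M :: "real^'e::finite^'r::finite"
  assumes "independent_columns M B"
  shows "span (range (\<lambda>r. \<chi> e. if e \<in> B then M $ r $ e else 0)) = {y. \<forall>e. e \<notin> B \<longrightarrow> y $ e = 0}"
    (is "span (range ?\<rho>) = ?Y")
proof
  have "subspace ?Y" unfolding subspace_def by auto
  thus sub: "span (range ?\<rho>) \<subseteq> ?Y" by (intro span_minimal) auto
  show "?Y \<subseteq> span (range ?\<rho>)"
  proof
    fix y assume y: "y \<in> ?Y"
    obtain p q where p: "p \<in> span (range ?\<rho>)"
      and q: "\<And>u. u \<in> span (range ?\<rho>) \<Longrightarrow> real_inner_class.orthogonal q u" and ypq: "y = p + q"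
      using orthogonal_subspace_decomp_exists[of "range ?\<rho>" y] by blast
    have "p \<in> ?Y" using p sub by blast
    hence qY: "q \<in> ?Y" using y ypq by auto
    \<comment> \<open>q is orthogonal to every restricted row, so it is a flow supported in B\<close>
    have "(M *v q) $ r = 0" for r
    proof -
      have "0 = (\<Sum>e\<in>UNIV. q $ e * (if e \<in> B then M $ r $ e else 0))"
        using q[OF span_base[of "?\<rho> r"]] by (simp add: real_inner_class.orthogonal_def inner_vec_def)
      also have "\<dots> = (M *v q) $ r"
        using qY by (auto simp: matrix_vector_mult_def intro: sum.cong)
      finally show ?thesis by simp
    qed
    hence "M *v q = 0" by (simp add: Finite_Cartesian_Product.vec_eq_iff)
    with assms qY have "q = 0" by (auto simp: independent_columns_def)
    thus "y \<in> span (range ?\<rho>)" using ypq p by simp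
  qed
qed

lemma independent_columns_nonsingular_minor:
  fixes M :: "real^'e::finite^'r::finite"
  assumes indep: "independent_columns M B" and g: "bij_betw g {..<k} B"
  obtains f where "inj_on f {..<k}" "det (mat k k (\<lambda>(i,j). M $ f i $ g j)) \<noteq> 0"
proof -
  define \<rho> where "\<rho> r = (\<chi> e. if e \<in> B then M $ r $ e else 0)" for r
  obtain Q where Q: "Q \<subseteq> range \<rho>" "independent Q" "range \<rho> \<subseteq> span Q"
    using maximal_independent_subset[of "range \<rho>"] by blast
  have "span Q = span (range \<rho>)"
    using Q span_mono[OF Q(1)] span_minimal[OF Q(3) subspace_span] by blast
  also have "\<dots> = {y. \<forall>e. e \<notin> B \<longrightarrow> y $ e = 0}"
    unfolding \<rho>_def by (rule span_restricted_rows[OF indep])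
  finally have "span Q = {y. \<forall>e. e \<notin> B \<longrightarrow> y $ e = 0}" .
  moreover have "dim {y::real^'e. \<forall>e. e \<notin> B \<longrightarrow> y $ e = 0} = card B"
    using dim_substandard_cart[where 'a=real and 'n='e, of B] by (simp add: Cartesian_Space.dim_vec_eq)
  ultimately have "card Q = card B"
    using dim_span_eq_card_independent[OF Q(2)] by simp
  also have "card B = k" using bij_betw_same_card[OF g] by simp
  finally obtain q where q: "bij_betw q {..<k} Q"
    using ex_bij_betw_nat_finite[of Q] independent_imp_finite[OF Q(2)] by (auto simp: atLeast0LessThan)
  define f where "f i = (SOME r. \<rho> r = q i)" for i
  have \<rho>f: "\<rho> (f i) = q i" if "i < k" for i
  proof -
    have "q i \<in> range \<rho>" using q that Q(1) by (auto simp: bij_betw_def)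
    thus ?thesis unfolding f_def by (metis (mono_tags, lifting) imageE someI)
  qed
  show thesis
  proof
    show "inj_on f {..<k}"
    proof (rule inj_onI)
      fix i j assume "i \<in> {..<k}" "j \<in> {..<k}" "f i = f j"
      hence "q i = q j" using \<rho>f by (metis lessThan_iff)
      thus "i = j" using q \<open>i \<in> {..<k}\<close> \<open>j \<in> {..<k}\<close> by (auto simp: bij_betw_def inj_on_def)
    qed
    show "det (mat k k (\<lambda>(i,j). M $ f i $ g j)) \<noteq> 0"
    proof (rule det_mat_nonzero)
      fix v assume v: "\<forall>j<k. (\<Sum>i<k. v i * M $ f i $ g j) = 0"
      \<comment> \<open>a vanishing combination of the chosen rows on the columns g is a dependence in Q\<close>
      have "(\<Sum>i<k. v i *\<^sub>R q i) $ e = 0" for e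
      proof -
        have "(\<Sum>i<k. v i *\<^sub>R q i) $ e = (\<Sum>i<k. v i * \<rho> (f i) $ e)"
          by (simp add: \<rho>f)
        also have "\<dots> = 0"
        proof (cases "e \<in> B")
          case True
          then obtain j where "j < k" "g j = e" using g by (auto simp: bij_betw_def)
          thus ?thesis using v True by (auto simp: \<rho>_def)
        qed (simp add: \<rho>_def)
        finally show ?thesis .
      qed
      hence "(\<Sum>i<k. v i *\<^sub>R q i) = 0" by (simp add: Finite_Cartesian_Product.vec_eq_iff)
      hence "(\<Sum>u\<in>Q. v (the_inv_into {..<k} q u) *\<^sub>R u) = 0"
        by (subst sum.reindex_bij_betw[OF q, symmetric])
           (simp add: the_inv_into_f_f[OF bij_betw_imp_inj_on[OF q]])
      hence "\<forall>u\<in>Q. v (the_inv_into {..<k} q u) = 0"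
        using Q(2) spec[of _ "\<lambda>u. v (the_inv_into {..<k} q u)"] unfolding independent_explicit by blast
      thus "\<forall>i<k. v i = 0"
        using q by (auto simp: bij_betw_def the_inv_into_f_f)
    qed
  qed
qed

lemma totally_unimodular_circuit_magnitudes:
  fixes M :: "real^'e::finite^'r::finite"
  assumes TU: "totally_unimodular M" and flow: "M *v w = 0"
    and indep: "independent_columns M (vec_support w - {e0})"
    and e0: "e0 \<in> vec_support w" and e: "e \<in> vec_support w"
  shows "\<bar>w $ e\<bar> = \<bar>w $ e0\<bar>"
proof (cases "e = e0")
  case False
  define B where "B = vec_support w - {e0}"
  define k where "k = card B"
  obtain g where g: "bij_betw g {..<k} B"
    using ex_bij_betw_nat_finite[of B] unfolding k_def atLeast0LessThan by auto
  obtain f where f: "inj_on f {..<k}" and A0: "det (mat k k (\<lambda>(i,j). M $ f i $ g j)) \<noteq> 0"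
    using independent_columns_nonsingular_minor[OF indep[folded B_def] g] .
  have minors: "det (mat k k (\<lambda>(i,j). M $ f i $ g' j)) \<in> {-1, 0, 1}" if "inj_on g' {..<k}" for g'
    using TU f that unfolding totally_unimodular_def sub_det_eq_det by blast
  have A1: "det (mat k k (\<lambda>(i,j). M $ f i $ g j)) \<in> {-1, 1}"
    using minors[of g] A0 g by (auto simp: bij_betw_def)
  have "e \<in> g ` {..<k}" using g e False by (simp add: bij_betw_def B_def)
  then obtain j where j: "j < k" "g j = e" by auto
  have w0: "w $ e0 \<noteq> 0" using e0 by (simp add: vec_support_def)
  \<comment> \<open>restricted to the rows f, the flow equations express column e0 through the columns g; by
    Cramer's rule each coefficient is a quotient of two minors, hence \<plusminus>1\<close>
  define x where "x l = - w $ g l / w $ e0" for l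
  have sys: "\<forall>i<k. (\<Sum>l<k. M $ f i $ g l * x l) = M $ f i $ e0"
  proof (intro allI impI)
    fix i assume "i < k"
    have "0 = (M *v w) $ f i" using flow by simp
    also have "\<dots> = (\<Sum>e\<in>insert e0 B. M $ f i $ e * w $ e)"
      unfolding matrix_vector_mult_support using e0 by (simp add: B_def insert_absorb)
    also have "\<dots> = M $ f i $ e0 * w $ e0 + (\<Sum>e\<in>B. M $ f i $ e * w $ e)"
      by (rule sum.insert) (auto simp: B_def)
    also have "(\<Sum>e\<in>B. M $ f i $ e * w $ e) = (\<Sum>l<k. M $ f i $ g l * w $ g l)"
      using sum.reindex_bij_betw[OF g, of "\<lambda>e. M $ f i $ e * w $ e"] by simp
    finally show "(\<Sum>l<k. M $ f i $ g l * x l) = M $ f i $ e0"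
      using w0 by (simp add: x_def sum_divide_distrib[symmetric] sum_negf field_simps)
  qed
  have "inj_on (g(j := e0)) {..<k}"
  proof -
    have "e0 \<notin> g ` ({..<k} - {j})" using g by (auto simp: bij_betw_def B_def)
    thus ?thesis using g j(1) by (auto simp: inj_on_def bij_betw_def)
  qed
  hence "det (mat k k (\<lambda>(i,l). if l = j then M $ f i $ e0 else M $ f i $ g l)) \<in> {-1, 0, 1}"
    using minors[of "g(j := e0)"] by (simp add: fun_upd_def if_distrib cong: if_cong)
  hence "x j * det (mat k k (\<lambda>(i,j). M $ f i $ g j)) \<in> {-1, 0, 1}"
    using det_mat_cramer[OF sys j(1)] by simp
  moreover have "x j \<noteq> 0" using e j w0 by (simp add: x_def vec_support_def)
  ultimately have "\<bar>x j\<bar> = 1" using A1 by auto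
  thus ?thesis using j w0 by (simp add: x_def abs_div)
qed simp

lemma conformal_shrink_support:
  fixes v w :: "real^'e::finite"
  assumes supp: "vec_support v \<subseteq> vec_support w" and e1: "v $ e1 * w $ e1 > 0"
  obtains t where "\<forall>e. (w - t *\<^sub>R v) $ e = 0 \<or> sgn ((w - t *\<^sub>R v) $ e) = sgn (w $ e)"
    and "vec_support (w - t *\<^sub>R v) \<subset> vec_support w"
proof -
  define T where "T = {e. v $ e * w $ e > 0}"
  define t where "t = Min ((\<lambda>e. w $ e / v $ e) ` T)"
  have "finite T" "e1 \<in> T" using e1 by (auto simp: T_def)
  hence "t \<in> (\<lambda>e. w $ e / v $ e) ` T" and tle: "\<And>e. e \<in> T \<Longrightarrow> t \<le> w $ e / v $ e"
    unfolding t_def by (auto intro: Min_in)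
  then obtain e2 where e2: "e2 \<in> T" "t = w $ e2 / v $ e2" by auto
  have t0: "t > 0" using e2 by (auto simp: T_def zero_less_mult_iff zero_less_divide_iff)
  have factor: "(w - t *\<^sub>R v) $ e = w $ e * (1 - t * (v $ e / w $ e))"
    and factor_nonneg: "1 - t * (v $ e / w $ e) \<ge> 0" if "w $ e \<noteq> 0" for e
  proof -
    show "(w - t *\<^sub>R v) $ e = w $ e * (1 - t * (v $ e / w $ e))" using that by (simp add: field_simps)
    show "1 - t * (v $ e / w $ e) \<ge> 0"
    proof (cases "e \<in> T")
      case True
      hence "t * (v $ e / w $ e) \<le> (w $ e / v $ e) * (v $ e / w $ e)"
        using tle by (intro mult_right_mono) (auto simp: T_def zero_less_mult_iff zero_le_divide_iff)
      also have "\<dots> \<le> 1" by simp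
      finally show ?thesis by simp
    next
      case False
      hence "v $ e * w $ e \<le> 0" by (simp add: T_def)
      hence "v $ e / w $ e \<le> 0" using that by (auto simp: divide_le_0_iff mult_le_0_iff)
      hence "t * (v $ e / w $ e) \<le> 0" using t0 less_imp_le mult_nonneg_nonpos by blast
      thus ?thesis by simp
    qed
  qed
  show thesis
  proof
    show "\<forall>e. (w - t *\<^sub>R v) $ e = 0 \<or> sgn ((w - t *\<^sub>R v) $ e) = sgn (w $ e)"
    proof
      fix e
      show "(w - t *\<^sub>R v) $ e = 0 \<or> sgn ((w - t *\<^sub>R v) $ e) = sgn (w $ e)"
      proof (cases "w $ e = 0")
        case True
        hence "v $ e = 0" using supp by (auto simp: vec_support_def)
        thus ?thesis using True by simp
      next
        case False
        have "1 - t * (v $ e / w $ e) = 0 \<or> 1 - t * (v $ e / w $ e) > 0"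
          using factor_nonneg[OF False] by linarith
        thus ?thesis using factor[OF False] by (auto simp: sgn_mult)
      qed
    qed
    have "(w - t *\<^sub>R v) $ e2 = 0" using e2 by (auto simp: T_def)
    moreover have "e2 \<in> vec_support w" using e2 by (auto simp: T_def vec_support_def)
    moreover have "vec_support (w - t *\<^sub>R v) \<subseteq> vec_support w"
      using supp by (auto simp: vec_support_def)
    ultimately show "vec_support (w - t *\<^sub>R v) \<subset> vec_support w"
      by (auto simp: vec_support_def)
  qed
qed

lemma minimal_conformal_flow_independent:
  fixes M :: "real^'e::finite^'r::finite" and z w :: "real^'e"
  assumes flow: "M *v w = 0" and conf: "\<forall>e. w $ e = 0 \<or> sgn (w $ e) = sgn (z $ e)"
    and minimal: "\<And>w'. M *v w' = 0 \<Longrightarrow> w' \<noteq> 0 \<Longrightarrow> \<forall>e. w' $ e = 0 \<or> sgn (w' $ e) = sgn (z $ e)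
                    \<Longrightarrow> card (vec_support w) \<le> card (vec_support w')"
    and e0: "e0 \<in> vec_support w"
  shows "independent_columns M (vec_support w - {e0})"
  unfolding independent_columns_def
proof (intro allI impI, rule ccontr)
  fix v assume v: "M *v v = 0 \<and> (\<forall>e. e \<notin> vec_support w - {e0} \<longrightarrow> v $ e = 0)" and "v \<noteq> 0"
  then obtain e1 where e1: "v $ e1 \<noteq> 0" by (auto simp: Finite_Cartesian_Product.vec_eq_iff)
  hence "w $ e1 \<noteq> 0" using v by (auto simp: vec_support_def)
  define v' where "v' = (if v $ e1 * w $ e1 > 0 then v else - v)"
  have "v' $ e1 * w $ e1 > 0"
    using e1 \<open>w $ e1 \<noteq> 0\<close> by (auto simp: v'_def zero_less_mult_iff mult_less_0_iff)
  moreover have v'_supp: "\<forall>e. e \<notin> vec_support w - {e0} \<longrightarrow> v' $ e = 0" using v by (simp add: v'_def)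
  hence "vec_support v' \<subseteq> vec_support w" by (auto simp: vec_support_def)
  ultimately obtain t where conf': "\<forall>e. (w - t *\<^sub>R v') $ e = 0 \<or> sgn ((w - t *\<^sub>R v') $ e) = sgn (w $ e)"
    and smaller: "vec_support (w - t *\<^sub>R v') \<subset> vec_support w"
    using conformal_shrink_support by blast
  have "M *v (w - t *\<^sub>R v') = 0"
    using flow v by (simp add: v'_def matrix_vector_mult_diff_distrib matrix_vector_mult_scaleR vec.neg)
  moreover have "(w - t *\<^sub>R v') $ e0 = w $ e0" using v'_supp by simp
  hence "w - t *\<^sub>R v' \<noteq> 0" using e0 by (auto simp: vec_support_def)
  moreover have "\<forall>e. (w - t *\<^sub>R v') $ e = 0 \<or> sgn ((w - t *\<^sub>R v') $ e) = sgn (z $ e)"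
  proof
    fix e show "(w - t *\<^sub>R v') $ e = 0 \<or> sgn ((w - t *\<^sub>R v') $ e) = sgn (z $ e)"
      using conf[rule_format, of e] conf'[rule_format, of e] by (metis sgn_0_0)
  qed
  ultimately have "card (vec_support w) \<le> card (vec_support (w - t *\<^sub>R v'))" by (rule minimal)
  moreover have "card (vec_support (w - t *\<^sub>R v')) < card (vec_support w)"
    using smaller by (simp add: psubset_card_mono)
  ultimately show False by simp
qed

text \<open>A conformal flow of minimal support is a circuit, on which total unimodularity forces equal
  magnitudes.\<close>

lemma exists_conformal_circuit:
  fixes M :: "real^'e::finite^'r::finite"
  assumes TU: "totally_unimodular M" and zf: "M *v z = 0" and z0: "z \<noteq> 0"
  obtains d where "M *v d = 0" "d \<noteq> 0" "\<forall>e. d $ e = 0 \<or> d $ e = sgn (z $ e)"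
proof -
  define P where "P w \<longleftrightarrow> M *v w = 0 \<and> w \<noteq> 0 \<and> (\<forall>e. w $ e = 0 \<or> sgn (w $ e) = sgn (z $ e))" for w
  have "P z" using zf z0 by (simp add: P_def)
  then obtain w where Pw: "P w" and min: "\<And>y. P y \<Longrightarrow> card (vec_support w) \<le> card (vec_support y)"
    using ex_has_least_nat[of P z "\<lambda>w. card (vec_support w)"] by blast
  have wf: "M *v w = 0" and w0: "w \<noteq> 0" and wc: "\<forall>e. w $ e = 0 \<or> sgn (w $ e) = sgn (z $ e)"
    using Pw by (auto simp: P_def)
  obtain e0 where e0: "e0 \<in> vec_support w"
    using w0 by (auto simp: vec_support_def Finite_Cartesian_Product.vec_eq_iff)
  have mag: "\<bar>w $ e\<bar> = \<bar>w $ e0\<bar>" if "e \<in> vec_support w" for e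
    using totally_unimodular_circuit_magnitudes[OF TU wf _ e0 that]
      minimal_conformal_flow_independent[OF wf wc _ e0] min by (auto simp: P_def)
  define m where "m = \<bar>w $ e0\<bar>"
  have m0: "m > 0" using e0 by (simp add: m_def vec_support_def)
  show thesis
  proof
    show "M *v ((1 / m) *\<^sub>R w) = 0" using wf by (simp add: matrix_vector_mult_scaleR)
    show "(1 / m) *\<^sub>R w \<noteq> 0" using w0 m0 by simp
    show "\<forall>e. ((1 / m) *\<^sub>R w) $ e = 0 \<or> ((1 / m) *\<^sub>R w) $ e = sgn (z $ e)"
    proof
      fix e
      show "((1 / m) *\<^sub>R w) $ e = 0 \<or> ((1 / m) *\<^sub>R w) $ e = sgn (z $ e)"
      proof (cases "w $ e = 0")
        case False
        hence "\<bar>w $ e\<bar> = m" using mag by (simp add: vec_support_def m_def)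
        hence "((1 / m) *\<^sub>R w) $ e = sgn (w $ e)" using False m0
          by (cases "w $ e > 0") (auto simp: sgn_if)
        thus ?thesis using wc False by metis
      qed simp
    qed
  qed
qed

section \<open>Integer flows and the Voronoi cell of 0\<close>

definition dist_excess :: "real^'e \<Rightarrow> real^'e \<Rightarrow> real" where
  "dist_excess x y = inner y y - 2 * inner x y"

lemma norm_diff_square_eq: "(norm (x - y))\<^sup>2 = (norm x)\<^sup>2 + dist_excess x y"
  by (simp add: dist_excess_def power2_norm_eq_inner inner_diff_left inner_diff_right inner_commute)

lemma dist_excess_add: "dist_excess x (a + b) = dist_excess x a + dist_excess x b + 2 * inner a b"
  by (simp add: dist_excess_def inner_commute algebra_simps)

lemma dist_excess_shift: "dist_excess x (l + y) = dist_excess x l + dist_excess (x - l) y"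
  by (simp add: dist_excess_def inner_commute algebra_simps)

lemma dist_excess_translate: "dist_excess (x + v) d = dist_excess x d - 2 * inner v d"
  by (simp add: dist_excess_def algebra_simps)

lemma dist_excess_affine:
  "a + b = 1 \<Longrightarrow> dist_excess (a *\<^sub>R y + b *\<^sub>R x) l = a * dist_excess y l + b * dist_excess x l"
  by (simp add: dist_excess_def algebra_simps) (metis distrib_right mult_1)

lemma voronoi_cell_zero_iff:
  "x \<in> voronoi_cell M 0 \<longleftrightarrow> x \<in> real_flows M \<and> (\<forall>\<mu>\<in>integer_flows M. dist_excess x \<mu> \<ge> 0)"
proof -
  have "norm x \<le> norm (x - \<mu>) \<longleftrightarrow> dist_excess x \<mu> \<ge> 0" for \<mu>
    using abs_le_square_iff[of "norm x" "norm (x - \<mu>)"] by (simp add: norm_diff_square_eq)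
  thus ?thesis by (auto simp: voronoi_cell_def)
qed

lemma subspace_real_flows: "subspace (real_flows M)"
  by (auto simp: subspace_def real_flows_def matrix_vector_right_distrib matrix_vector_mult_scaleR)

lemma integer_flows_diff: "a \<in> integer_flows M \<Longrightarrow> b \<in> integer_flows M \<Longrightarrow> a - b \<in> integer_flows M"
  by (auto simp: integer_flows_def real_flows_def matrix_vector_mult_diff_distrib)

lemma integer_flows_add: "a \<in> integer_flows M \<Longrightarrow> b \<in> integer_flows M \<Longrightarrow> a + b \<in> integer_flows M"
  by (auto simp: integer_flows_def real_flows_def matrix_vector_right_distrib)

lemma zero_in_integer_flows: "0 \<in> integer_flows M"
  by (auto simp: integer_flows_def real_flows_def)

lemma integer_flows_sum:
  "finite A \<Longrightarrow> (\<And>i. i \<in> A \<Longrightarrow> f i \<in> integer_flows M) \<Longrightarrow> sum f A \<in> integer_flows M"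
  by (induction A rule: finite_induct) (auto intro: integer_flows_add zero_in_integer_flows)

lemma sign_flow_in_integer_flows:
  assumes "M *v d = 0" and "\<forall>e. d $ e = 0 \<or> d $ e = sgn (z $ e)"
  shows "d \<in> integer_flows M"
proof -
  have "sgn (z $ e) \<in> \<int>" for e by (simp add: sgn_if)
  hence "d $ e \<in> \<int>" for e using assms(2) by (metis Ints_0)
  thus ?thesis using assms(1) by (simp add: integer_flows_def real_flows_def)
qed

definition l1_norm :: "real^'e \<Rightarrow> real" where
  "l1_norm y = (\<Sum>e\<in>UNIV. \<bar>y $ e\<bar>)"

lemma integer_flows_l1_induct[consumes 1, case_names step]:
  fixes M :: "real^'e::finite^'r::finite"
  assumes "l \<in> integer_flows M"
    and step: "\<And>l. l \<in> integer_flows M \<Longrightarrow>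
                 (\<And>l'. l' \<in> integer_flows M \<Longrightarrow> l1_norm l' + 1 \<le> l1_norm l \<Longrightarrow> P l') \<Longrightarrow> P l"
  shows "P l"
proof -
  have "\<forall>l\<in>integer_flows M. l1_norm l \<le> real n \<longrightarrow> P l" for n
  proof (induction n)
    case 0
    have nonneg: "l1_norm l \<ge> 0" for l :: "real^'e" by (simp add: l1_norm_def sum_nonneg)
    have "\<not> l1_norm l' + 1 \<le> l1_norm l" if "l1_norm l \<le> real 0" for l l' :: "real^'e"
      using that nonneg[of l'] by linarith
    thus ?case using step by blast
  next
    case (Suc n)
    have "\<And>l l'. l1_norm l \<le> real (Suc n) \<Longrightarrow> l1_norm l' + 1 \<le> l1_norm l \<Longrightarrow> l1_norm l' \<le> real n"
      by simp
    thus ?case using step Suc.IH by blast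
  qed
  moreover obtain n where "l1_norm l \<le> real n" using real_arch_simple by blast
  ultimately show "P l" using assms(1) by blast
qed

lemma integer_flow_peel_circuit:
  fixes M :: "real^'e::finite^'r::finite"
  assumes TU: "totally_unimodular M" and l: "l \<in> integer_flows M" and l0: "l \<noteq> 0"
  obtains d where "d \<in> integer_flows M" "\<forall>e. d $ e = 0 \<or> d $ e = sgn (l $ e)"
    "l - d \<in> integer_flows M" "l1_norm (l - d) + 1 \<le> l1_norm l" "inner (l - d) d \<ge> 0"
    "\<forall>e. (l - d) $ e = 0 \<or> sgn ((l - d) $ e) = sgn (l $ e)"
proof -
  have lf: "M *v l = 0" and li: "\<forall>e. l $ e \<in> \<int>" using l by (auto simp: integer_flows_def real_flows_def)
  obtain d where df: "M *v d = 0" and d0: "d \<noteq> 0" and dc: "\<forall>e. d $ e = 0 \<or> d $ e = sgn (l $ e)"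
    using exists_conformal_circuit[OF TU lf l0] by blast
  have di: "d \<in> integer_flows M" using sign_flow_in_integer_flows[OF df dc] .
  \<comment> \<open>integrality: a nonzero entry of l has absolute value at least 1, so subtracting its sign
    does not change sides\<close>
  have entry: "\<bar>(l - d) $ e\<bar> + \<bar>d $ e\<bar> = \<bar>l $ e\<bar> \<and> (l - d) $ e * d $ e \<ge> 0 \<and>
      ((l - d) $ e = 0 \<or> sgn ((l - d) $ e) = sgn (l $ e))" for e
  proof (cases "d $ e = 0")
    case False
    hence de: "d $ e = sgn (l $ e)" using dc[rule_format, of e] by simp
    hence le: "l $ e \<noteq> 0" using False by (cases "l $ e = 0") simp_all
    obtain n where "l $ e = of_int n" using li by (metis Ints_cases)
    hence "\<bar>l $ e\<bar> \<ge> 1" using le by simp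
    thus ?thesis using de le by (cases "l $ e > 0") (auto simp: sgn_if)
  qed simp
  obtain e1 where e1: "d $ e1 \<noteq> 0" using d0 by (auto simp: Finite_Cartesian_Product.vec_eq_iff)
  have "l1_norm (l - d) + l1_norm d = l1_norm l"
    unfolding l1_norm_def sum.distrib[symmetric] using entry by (intro sum.cong) auto
  moreover have "1 \<le> l1_norm d"
  proof -
    have "1 = \<bar>d $ e1\<bar>" using dc[rule_format, of e1] e1 by (auto simp: sgn_if split: if_splits)
    also have "\<bar>d $ e1\<bar> \<le> l1_norm d" unfolding l1_norm_def by (rule member_le_sum) auto
    finally show ?thesis .
  qed
  moreover have "inner (l - d) d \<ge> 0"
    unfolding inner_vec_def using entry by (intro sum_nonneg) (simp add: mult.commute)
  ultimately show thesis
    using that[OF di dc integer_flows_diff[OF l di]] entry by simp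
qed

definition unit_flows :: "real^'e^'r \<Rightarrow> (real^'e) set" where
  "unit_flows M = {d \<in> integer_flows M. \<forall>e. d $ e \<in> {-1, 0, 1}}"

lemma finite_unit_flows: "finite (unit_flows (M::real^'e::finite^'r))"
proof (rule finite_subset)
  show "unit_flows M \<subseteq> vec_lambda ` (PiE UNIV (\<lambda>_. {-1, 0, 1::real}))"
  proof
    fix v assume "v \<in> unit_flows M"
    hence "vec_nth v \<in> PiE UNIV (\<lambda>_. {-1, 0, 1::real})" by (auto simp: unit_flows_def PiE_iff)
    thus "v \<in> vec_lambda ` (PiE UNIV (\<lambda>_. {-1, 0, 1::real}))" by (metis image_eqI vec_nth_inverse)
  qed
qed (intro finite_imageI finite_PiE; simp)

text \<open>The unit flows are the only Voronoi-relevant vectors: peeling conformal circuits off an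
  integer flow l writes l as a sum of unit flows with pairwise nonnegative inner products.\<close>

lemma voronoi_cell_zero_if_unit_flows:
  fixes M :: "real^'e::finite^'r::finite"
  assumes TU: "totally_unimodular M" and xf: "x \<in> real_flows M"
    and unit: "\<And>d. d \<in> unit_flows M \<Longrightarrow> dist_excess x d \<ge> 0"
  shows "x \<in> voronoi_cell M 0"
proof -
  have "dist_excess x l \<ge> 0" if "l \<in> integer_flows M" for l
    using that
  proof (induction l rule: integer_flows_l1_induct)
    case (step l)
    show ?case
    proof (cases "l = 0")
      case False
      then obtain d where d: "d \<in> integer_flows M" "\<forall>e. d $ e = 0 \<or> d $ e = sgn (l $ e)"
        "l - d \<in> integer_flows M" "l1_norm (l - d) + 1 \<le> l1_norm l" "inner (l - d) d \<ge> 0"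
        using integer_flow_peel_circuit[OF TU step(1)] by metis
      have "d \<in> unit_flows M" using d(1,2) by (auto simp: unit_flows_def sgn_if) (metis)
      hence "dist_excess x d \<ge> 0" by (rule unit)
      moreover have "dist_excess x (l - d) \<ge> 0" using step(2)[OF d(3,4)] .
      ultimately show ?thesis using dist_excess_add[of x "l - d" d] d(5) by simp
    qed (simp add: dist_excess_def)
  qed
  thus ?thesis using xf voronoi_cell_zero_iff by blast
qed

lemma dist_excess_zero_imp_unit_flow:
  fixes M :: "real^'e::finite^'r::finite"
  assumes TU: "totally_unimodular M"
    and nonneg: "\<And>y. y \<in> integer_flows M \<Longrightarrow> dist_excess x y \<ge> 0"
  shows "\<delta> \<in> integer_flows M \<Longrightarrow> dist_excess x \<delta> = 0 \<Longrightarrow> \<delta> \<in> unit_flows M"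
proof (induction \<delta> rule: integer_flows_l1_induct)
  case (step l)
  show ?case
  proof (cases "l = 0")
    case False
    then obtain d where d: "d \<in> integer_flows M" "\<forall>e. d $ e = 0 \<or> d $ e = sgn (l $ e)"
      "l - d \<in> integer_flows M" "l1_norm (l - d) + 1 \<le> l1_norm l" "inner (l - d) d \<ge> 0"
      "\<forall>e. (l - d) $ e = 0 \<or> sgn ((l - d) $ e) = sgn (l $ e)"
      using integer_flow_peel_circuit[OF TU step(1)] by metis
    have "dist_excess x l = dist_excess x (l - d) + dist_excess x d + 2 * inner (l - d) d"
      using dist_excess_add[of x "l - d" d] by simp
    moreover have "dist_excess x (l - d) \<ge> 0" "dist_excess x d \<ge> 0" using nonneg d(1,3) by auto
    ultimately have "dist_excess x (l - d) = 0" and orth: "inner (l - d) d = 0"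
      using step(3) d(5) by linarith+
    hence IH: "l - d \<in> unit_flows M" using step(2)[OF d(3,4)] by blast
    \<comment> \<open>l - d and d are conformal to l and orthogonal, hence have disjoint supports\<close>
    have disjoint: "(l - d) $ e * d $ e = 0" for e
    proof -
      have "(l - d) $ e * d $ e \<ge> 0" for e
      proof (cases "d $ e = 0 \<or> (l - d) $ e = 0")
        case False
        hence "d $ e = sgn ((l - d) $ e)" using d(2,6) by metis
        thus ?thesis by (metis abs_ge_zero abs_sgn)
      qed auto
      moreover have "(\<Sum>e\<in>UNIV. (l - d) $ e * d $ e) = 0" using orth by (simp add: inner_vec_def)
      ultimately show ?thesis using sum_nonneg_eq_0_iff[of UNIV "\<lambda>e. (l - d) $ e * d $ e"] by auto
    qed
    have "l $ e \<in> {-1, 0, 1}" for e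
    proof (cases "d $ e = 0")
      case True
      have "(l - d) $ e \<in> {-1, 0, 1}" using IH by (simp add: unit_flows_def)
      thus ?thesis using True by simp
    next
      case False
      hence "l $ e = d $ e" using disjoint[of e] by simp
      moreover have "d $ e = sgn (l $ e)" using d(2)[rule_format, of e] False by simp
      ultimately have "l $ e = sgn (l $ e)" by simp
      thus ?thesis by (cases "l $ e" "0::real" rule: linorder_cases) auto
    qed
    thus ?thesis using step(1) by (simp add: unit_flows_def)
  qed (simp add: unit_flows_def zero_in_integer_flows)
qed

section \<open>Nearest flows\<close>

definition nearest_flows :: "real^'e^'r \<Rightarrow> real^'e \<Rightarrow> (real^'e) set" where
  "nearest_flows M x = {l \<in> integer_flows M. dist_excess x l = 0}"

definition joint_support :: "(real^'e) set \<Rightarrow> 'e set" where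
  "joint_support N = {e. \<exists>l\<in>N. l $ e \<noteq> 0}"

definition joint_orientation :: "(real^'e) set \<Rightarrow> 'e \<Rightarrow> int" where
  "joint_orientation N e = (if \<exists>l\<in>N. l $ e = 1 then 1 else if \<exists>l\<in>N. l $ e = -1 then -1 else 0)"

definition oriented_unit_flows :: "real^'e^'r \<Rightarrow> ('e \<Rightarrow> int) \<Rightarrow> (real^'e) set" where
  "oriented_unit_flows M \<epsilon> = {l \<in> integer_flows M. \<forall>e. l $ e = 0 \<or> l $ e = of_int (\<epsilon> e)}"

definition conforms :: "('e \<Rightarrow> int) \<Rightarrow> real^'e \<Rightarrow> bool" where
  "conforms \<epsilon> y \<longleftrightarrow> (\<forall>e. y $ e = 0 \<or> sgn (y $ e) = of_int (\<epsilon> e))"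

lemma conforms_if_sign_conformal:
  assumes "\<forall>e. y $ e = 0 \<or> sgn (y $ e) = sgn (z $ e)" and "conforms \<epsilon> z"
  shows "conforms \<epsilon> y"
  unfolding conforms_def
proof
  fix e show "y $ e = 0 \<or> sgn (y $ e) = of_int (\<epsilon> e)"
    using assms(1)[rule_format, of e] assms(2)[unfolded conforms_def, rule_format, of e]
    by (auto simp: sgn_0_0)
qed

definition support_flows :: "real^'e^'r \<Rightarrow> 'e set \<Rightarrow> (real^'e) set" where
  "support_flows M S = {y. M *v y = 0 \<and> (\<forall>e. e \<notin> S \<longrightarrow> y $ e = 0)}"

lemma subspace_support_flows: "subspace (support_flows M S)"
  by (auto simp: subspace_def support_flows_def matrix_vector_right_distrib matrix_vector_mult_scaleR)

lemma nearest_flows_diff_unit: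
  fixes M :: "real^'e::finite^'r::finite"
  assumes TU: "totally_unimodular M" and x: "x \<in> voronoi_cell M 0"
    and l: "l \<in> nearest_flows M x" and m: "m \<in> nearest_flows M x"
  shows "m - l \<in> unit_flows M"
proof -
  have li: "l \<in> integer_flows M" and l0: "dist_excess x l = 0"
    and mi: "m \<in> integer_flows M" and m0: "dist_excess x m = 0"
    using l m by (auto simp: nearest_flows_def)
  \<comment> \<open>x - l lies in the Voronoi cell as well, and m - l is one of its nearest flows\<close>
  have "dist_excess (x - l) y \<ge> 0" if "y \<in> integer_flows M" for y
  proof -
    have "dist_excess x (l + y) \<ge> 0" using x integer_flows_add[OF li that] voronoi_cell_zero_iff by blast
    thus ?thesis using dist_excess_shift[of x l y] l0 by simp
  qed
  moreover have "dist_excess (x - l) (m - l) = 0" using dist_excess_shift[of x l "m - l"] l0 m0 by simp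
  ultimately show ?thesis using dist_excess_zero_imp_unit_flow[OF TU] integer_flows_diff[OF mi li] by blast
qed

lemma nearest_flows_subset_unit_flows:
  fixes M :: "real^'e::finite^'r::finite"
  assumes TU: "totally_unimodular M" and x: "x \<in> voronoi_cell M 0"
  shows "nearest_flows M x \<subseteq> unit_flows M"
proof -
  have "0 \<in> nearest_flows M x" by (simp add: nearest_flows_def zero_in_integer_flows dist_excess_def)
  thus ?thesis using nearest_flows_diff_unit[OF TU x, of 0] by auto
qed

lemma joint_orientation_eq:
  fixes M :: "real^'e::finite^'r::finite"
  assumes TU: "totally_unimodular M" and x: "x \<in> voronoi_cell M 0"
    and N: "N \<subseteq> nearest_flows M x" and l: "l \<in> N" and le: "l $ e \<noteq> 0"
  shows "of_int (joint_orientation N e) = l $ e"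
proof -
  have unit: "m $ e \<in> {-1, 0, 1}" if "m \<in> N" for m
    using nearest_flows_subset_unit_flows[OF TU x] N that by (auto simp: unit_flows_def)
  \<comment> \<open>two nearest flows cannot use e in opposite directions, their difference would have entry \<plusminus>2\<close>
  have same: "m $ e = l $ e" if "m \<in> N" "m $ e \<noteq> 0" for m
  proof -
    have "(m - l) $ e \<in> {-1, 0, 1}"
      using nearest_flows_diff_unit[OF TU x, of l m] N l that(1) by (auto simp: unit_flows_def)
    thus ?thesis using unit[OF l] unit[OF that(1)] le that(2) by auto
  qed
  show ?thesis
  proof (cases "l $ e = 1")
    case True
    thus ?thesis using l by (auto simp: joint_orientation_def)
  next
    case False
    hence "l $ e = -1" using unit[OF l] le by auto
    moreover have "\<not> (\<exists>m\<in>N. m $ e = 1)" using same calculation by force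
    ultimately show ?thesis using l by (auto simp: joint_orientation_def)
  qed
qed

lemma joint_orientation_outside: "e \<notin> joint_support N \<Longrightarrow> joint_orientation N e = 0"
  by (auto simp: joint_orientation_def joint_support_def)

lemma joint_orientation_range: "joint_orientation N e \<in> {-1, 0, 1}"
  by (auto simp: joint_orientation_def)

lemma conforming_integer_flow_inner_nonneg:
  fixes M :: "real^'e::finite^'r::finite"
  assumes TU: "totally_unimodular M"
    and D: "\<And>d. d \<in> oriented_unit_flows M \<epsilon> \<Longrightarrow> inner a d \<ge> 0"
  shows "y \<in> integer_flows M \<Longrightarrow> conforms \<epsilon> y \<Longrightarrow> inner a y \<ge> 0"
proof (induction y rule: integer_flows_l1_induct)
  case (step l)
  show ?case
  proof (cases "l = 0")
    case False
    then obtain d where d: "d \<in> integer_flows M" "\<forall>e. d $ e = 0 \<or> d $ e = sgn (l $ e)"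
      "l - d \<in> integer_flows M" "l1_norm (l - d) + 1 \<le> l1_norm l"
      "\<forall>e. (l - d) $ e = 0 \<or> sgn ((l - d) $ e) = sgn (l $ e)"
      using integer_flow_peel_circuit[OF TU step(1)] by metis
    have "d $ e = 0 \<or> d $ e = of_int (\<epsilon> e)" for e
      using d(2)[rule_format, of e] step(3)[unfolded conforms_def, rule_format, of e] by auto
    hence "inner a d \<ge> 0" using D d(1) by (simp add: oriented_unit_flows_def)
    moreover have "inner a (l - d) \<ge> 0"
      using step(2)[OF d(3,4)] conforms_if_sign_conformal[OF d(5) step(3)] by blast
    ultimately show ?thesis by (simp add: inner_diff_right)
  qed simp
qed

lemma conforming_flow_in_span:
  fixes M :: "real^'e::finite^'r::finite"
  assumes TU: "totally_unimodular M"
  shows "M *v z = 0 \<Longrightarrow> conforms \<epsilon> z \<Longrightarrow> z \<in> span (oriented_unit_flows M \<epsilon>)"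
proof (induction "card (vec_support z)" arbitrary: z rule: less_induct)
  case less
  show ?case
  proof (cases "z = 0")
    case False
    obtain d where df: "M *v d = 0" and d0: "d \<noteq> 0" and dc: "\<forall>e. d $ e = 0 \<or> d $ e = sgn (z $ e)"
      using exists_conformal_circuit[OF TU less(2) False] by blast
    have "d $ e = 0 \<or> d $ e = of_int (\<epsilon> e)" for e
      using dc[rule_format, of e] less(3)[unfolded conforms_def, rule_format, of e] by auto
    hence dD: "d \<in> oriented_unit_flows M \<epsilon>"
      using sign_flow_in_integer_flows[OF df dc] by (simp add: oriented_unit_flows_def)
    obtain e1 where "d $ e1 \<noteq> 0" using d0 by (auto simp: Finite_Cartesian_Product.vec_eq_iff)
    hence "d $ e1 = sgn (z $ e1)" and "z $ e1 \<noteq> 0" using dc[rule_format, of e1] by auto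
    hence "d $ e1 * z $ e1 = \<bar>z $ e1\<bar>" by (simp add: abs_sgn mult.commute)
    hence "d $ e1 * z $ e1 > 0" using \<open>z $ e1 \<noteq> 0\<close> by simp
    moreover have "vec_support d \<subseteq> vec_support z" using dc by (auto simp: vec_support_def)
    ultimately obtain t where conf: "\<forall>e. (z - t *\<^sub>R d) $ e = 0 \<or> sgn ((z - t *\<^sub>R d) $ e) = sgn (z $ e)"
      and smaller: "vec_support (z - t *\<^sub>R d) \<subset> vec_support z"
      using conformal_shrink_support by blast
    have "M *v (z - t *\<^sub>R d) = 0"
      using less(2) df by (simp add: matrix_vector_mult_diff_distrib matrix_vector_mult_scaleR)
    moreover have "conforms \<epsilon> (z - t *\<^sub>R d)"
      using conforms_if_sign_conformal[OF conf less(3)] .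
    moreover have "card (vec_support (z - t *\<^sub>R d)) < card (vec_support z)"
      using smaller by (simp add: psubset_card_mono)
    ultimately have "z - t *\<^sub>R d \<in> span (oriented_unit_flows M \<epsilon>)" using less(1) by blast
    from span_add[OF this span_scale[OF span_base[OF dD], of t]] show ?thesis by simp
  qed (simp add: span_zero)
qed

lemma exists_flow_positive_on_joint_support:
  fixes M :: "real^'e::finite^'r::finite"
  assumes TU: "totally_unimodular M" and x: "x \<in> voronoi_cell M 0"
  defines "N \<equiv> nearest_flows M x"
  obtains p where "p \<in> integer_flows M" "p \<in> span N"
    "\<forall>e\<in>joint_support N. of_int (joint_orientation N e) * p $ e \<ge> 1"
    "\<forall>e. e \<notin> joint_support N \<longrightarrow> p $ e = 0"
proof -
  obtain pk where pk: "\<forall>e\<in>joint_support N. pk e \<in> N \<and> pk e $ e \<noteq> 0"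
    using bchoice[of "joint_support N" "\<lambda>e l. l \<in> N \<and> l $ e \<noteq> 0"] by (auto simp: joint_support_def)
  define p where "p = (\<Sum>e\<in>joint_support N. pk e)"
  have orient: "of_int (joint_orientation N e) = l $ e" if "l \<in> N" "l $ e \<noteq> 0" for e l
    using joint_orientation_eq[OF TU x _ that] by (simp add: N_def)
  have unit: "l $ e \<in> {-1, 0, 1}" if "l \<in> N" for e l
    using nearest_flows_subset_unit_flows[OF TU x] that by (auto simp: N_def unit_flows_def)
  show thesis
  proof
    show "p \<in> integer_flows M" unfolding p_def
      using pk by (intro integer_flows_sum) (auto simp: N_def nearest_flows_def)
    show "p \<in> span N" unfolding p_def using pk by (intro span_sum span_base) auto
    show "\<forall>e. e \<notin> joint_support N \<longrightarrow> p $ e = 0"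
    proof (intro allI impI)
      fix e assume "e \<notin> joint_support N"
      hence "pk f $ e = 0" if "f \<in> joint_support N" for f
        using pk that by (auto simp: joint_support_def)
      thus "p $ e = 0" by (simp add: p_def)
    qed
    show "\<forall>e\<in>joint_support N. of_int (joint_orientation N e) * p $ e \<ge> 1"
    proof
      fix e assume e: "e \<in> joint_support N"
      \<comment> \<open>every summand contributes 0 or 1, and the one chosen for e contributes 1\<close>
      have square: "of_int (joint_orientation N e) * pk f $ e = (pk f $ e)\<^sup>2" if "f \<in> joint_support N" for f
      proof (cases "pk f $ e = 0")
        case False
        thus ?thesis using orient[of "pk f" e] pk that by (simp add: power2_eq_square)
      qed simp
      have "1 = of_int (joint_orientation N e) * pk e $ e"
        using square[OF e] unit[of "pk e" e] pk e by auto
      also have "\<dots> \<le> (\<Sum>f\<in>joint_support N. of_int (joint_orientation N e) * pk f $ e)"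
        using square by (intro member_le_sum[OF e]) simp_all
      also have "\<dots> = of_int (joint_orientation N e) * p $ e"
        by (simp add: p_def sum_distrib_left)
      finally show "of_int (joint_orientation N e) * p $ e \<ge> 1" .
    qed
  qed
qed

lemma dist_excess_oriented_unit_flow:
  assumes "d \<in> oriented_unit_flows M \<epsilon>"
  shows "dist_excess x d = inner ((\<chi> e. of_int (\<epsilon> e)) - 2 *\<^sub>R x) d"
proof -
  have "d $ e * d $ e = of_int (\<epsilon> e) * d $ e" for e
    using assms unfolding oriented_unit_flows_def by auto
  hence "inner d d = inner (\<chi> e. of_int (\<epsilon> e)) d" unfolding inner_vec_def by (intro sum.cong) auto
  thus ?thesis by (simp add: dist_excess_def inner_diff_left)
qed

text \<open>The inclusion
  from right to left is a linear-programming argument: the functional a = \<epsilon> - 2x is nonnegative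
  on the cone of \<epsilon>-conformal flows, and vanishes on the point p of that cone's relative interior
  built from nearest flows.\<close>

lemma nearest_flows_eq_oriented_unit_flows:
  fixes M :: "real^'e::finite^'r::finite"
  assumes TU: "totally_unimodular M" and x: "x \<in> voronoi_cell M 0"
  shows "nearest_flows M x = oriented_unit_flows M (joint_orientation (nearest_flows M x))"
    (is "?N = oriented_unit_flows M ?\<epsilon>")
proof
  show N_sub: "?N \<subseteq> oriented_unit_flows M ?\<epsilon>"
  proof
    fix l assume l: "l \<in> ?N"
    have "l $ e = 0 \<or> l $ e = of_int (?\<epsilon> e)" for e
      using joint_orientation_eq[OF TU x order_refl l, of e] by (cases "l $ e = 0") auto
    thus "l \<in> oriented_unit_flows M ?\<epsilon>" using l by (simp add: oriented_unit_flows_def nearest_flows_def)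
  qed
  show "oriented_unit_flows M ?\<epsilon> \<subseteq> ?N"
  proof
    fix l assume l: "l \<in> oriented_unit_flows M ?\<epsilon>"
    define a where "a = (\<chi> e. of_int (?\<epsilon> e)) - 2 *\<^sub>R x"
    have D_nonneg: "inner a d \<ge> 0" if "d \<in> oriented_unit_flows M ?\<epsilon>" for d
      using that x dist_excess_oriented_unit_flow[OF that, of x]
      by (auto simp: a_def voronoi_cell_zero_iff oriented_unit_flows_def)
    obtain p where p: "p \<in> integer_flows M" "p \<in> span ?N"
      "\<forall>e\<in>joint_support ?N. of_int (?\<epsilon> e) * p $ e \<ge> 1" "\<forall>e. e \<notin> joint_support ?N \<longrightarrow> p $ e = 0"
      using exists_flow_positive_on_joint_support[OF TU x] by blast
    have "inner a v = 0" if "v \<in> ?N" for v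
      using that N_sub dist_excess_oriented_unit_flow[of v M ?\<epsilon> x] by (auto simp: a_def nearest_flows_def)
    hence ap: "inner a p = 0"
      using orthogonal_to_span[OF p(2), of a] by (simp add: real_inner_class.orthogonal_def)
    have li: "l \<in> integer_flows M" and l_entries: "\<forall>e. l $ e = 0 \<or> l $ e = of_int (?\<epsilon> e)"
      using l by (auto simp: oriented_unit_flows_def)
    have "conforms ?\<epsilon> (p - l)"
      unfolding conforms_def
    proof
      fix e
      show "(p - l) $ e = 0 \<or> sgn ((p - l) $ e) = of_int (?\<epsilon> e)"
      proof (cases "e \<in> joint_support ?N")
        case False
        thus ?thesis using p(4) l_entries joint_orientation_outside[OF False] by auto
      next
        case True
        thus ?thesis using p(3) l_entries[rule_format, of e] joint_orientation_range[of ?N e]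
          by (auto simp: sgn_if)
      qed
    qed
    hence "inner a (p - l) \<ge> 0"
      using conforming_integer_flow_inner_nonneg[OF TU D_nonneg integer_flows_diff[OF p(1) li]] by blast
    hence "inner a l = 0" using ap D_nonneg[OF l] by (simp add: inner_diff_right)
    thus "l \<in> ?N" using li dist_excess_oriented_unit_flow[OF l, of x] by (simp add: a_def nearest_flows_def)
  qed
qed

lemma span_nearest_flows:
  fixes M :: "real^'e::finite^'r::finite"
  assumes TU: "totally_unimodular M" and x: "x \<in> voronoi_cell M 0"
  shows "span (nearest_flows M x) = support_flows M (joint_support (nearest_flows M x))"
proof
  let ?N = "nearest_flows M x" and ?\<epsilon> = "joint_orientation (nearest_flows M x)"
    and ?S = "joint_support (nearest_flows M x)"
  show "span ?N \<subseteq> support_flows M ?S"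
    by (rule span_minimal[OF _ subspace_support_flows])
       (auto simp: support_flows_def joint_support_def nearest_flows_def integer_flows_def real_flows_def)
  show "support_flows M ?S \<subseteq> span ?N"
  proof
    fix y assume y: "y \<in> support_flows M ?S"
    obtain p where p: "p \<in> integer_flows M" "p \<in> span ?N"
      "\<forall>e\<in>?S. of_int (?\<epsilon> e) * p $ e \<ge> 1" "\<forall>e. e \<notin> ?S \<longrightarrow> p $ e = 0"
      using exists_flow_positive_on_joint_support[OF TU x] by blast
    \<comment> \<open>a large multiple of p dominates y, so y + t p is a conforming flow\<close>
    define t where "t = l1_norm y + 1"
    have ty: "\<bar>y $ e\<bar> < t" for e
      using member_le_sum[of e UNIV "\<lambda>e. \<bar>y $ e\<bar>"] by (simp add: t_def l1_norm_def)
    define z where "z = y + t *\<^sub>R p"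
    have zf: "M *v z = 0" using y p(1)
      by (simp add: z_def support_flows_def integer_flows_def real_flows_def
          matrix_vector_right_distrib matrix_vector_mult_scaleR)
    have "conforms ?\<epsilon> z"
      unfolding conforms_def
    proof
      fix e
      show "z $ e = 0 \<or> sgn (z $ e) = of_int (?\<epsilon> e)"
      proof (cases "e \<in> ?S")
        case False thus ?thesis using y p(4) by (simp add: z_def support_flows_def)
      next
        case True
        have "of_int (?\<epsilon> e) * z $ e = of_int (?\<epsilon> e) * y $ e + t * (of_int (?\<epsilon> e) * p $ e)"
          by (simp add: z_def algebra_simps)
        also have "\<dots> \<ge> of_int (?\<epsilon> e) * y $ e + t"
          using mult_left_mono[OF p(3)[rule_format, OF True], of t] ty[of e] by simp
        finally have "of_int (?\<epsilon> e) * z $ e > 0"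
          using ty[of e] joint_orientation_range[of ?N e] by (auto simp: abs_if split: if_splits)
        thus ?thesis using joint_orientation_range[of ?N e] by (auto simp: sgn_if zero_less_mult_iff)
      qed
    qed
    hence "z \<in> span (oriented_unit_flows M ?\<epsilon>)" by (rule conforming_flow_in_span[OF TU zf])
    with nearest_flows_eq_oriented_unit_flows[OF TU x] have "z \<in> span ?N"
      by (rule ssubst[where P = "\<lambda>S. z \<in> span S"])
    from span_diff[OF this span_scale[OF p(2), of t]] show "y \<in> span ?N" by (simp add: z_def)
  qed
qed


lemma integer_unit_mult_le_square:
  fixes l c :: real
  assumes l: "l \<in> \<int>" and c: "c \<in> {-1, 0, 1}"
  shows "c * l \<le> l * l \<and> (c * l = l * l \<longleftrightarrow> l = 0 \<or> l = c)"
proof (cases "l = 0")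
  case False
  obtain n where n: "l = of_int n" using l by (metis Ints_cases)
  hence "\<bar>l\<bar> \<ge> 1" using False by simp
  hence "\<bar>l\<bar> * 1 \<le> \<bar>l\<bar> * \<bar>l\<bar>" by (intro mult_left_mono) auto
  hence "\<bar>l\<bar> \<le> l * l" by simp
  moreover have "c * l \<le> \<bar>l\<bar>" using c by auto
  moreover have "c * l = l * l \<longleftrightarrow> l = c" using False by auto
  ultimately show ?thesis using False by simp
qed simp

text \<open>Every sign vector \<epsilon> is realised: the orthogonal projection of \<epsilon>/2 to the flow space
  has exactly the \<epsilon>-oriented unit flows as nearest lattice points, since for an integer flow l
  the excess is the sum over e of the nonnegative terms l(e)^2 - \<epsilon>(e) l(e).\<close>

lemma exists_voronoi_point_with_nearest_flows:
  fixes M :: "real^'e::finite^'r::finite"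
  assumes \<epsilon>: "\<forall>e. \<epsilon> e \<in> {-1, 0, 1}"
  obtains x where "x \<in> voronoi_cell M 0" "nearest_flows M x = oriented_unit_flows M \<epsilon>"
proof -
  obtain x z where x: "x \<in> span (real_flows M)"
    and z: "\<And>w. w \<in> span (real_flows M) \<Longrightarrow> real_inner_class.orthogonal z w"
    and u: "(\<chi> e. of_int (\<epsilon> e) / 2) = x + z"
    using orthogonal_subspace_decomp_exists[of "real_flows M" "\<chi> e. of_int (\<epsilon> e) / 2"] by blast
  have span_flows: "span (real_flows M) = real_flows M"
    using subspace_real_flows by (rule span_eq_iff[THEN iffD2])
  have excess: "dist_excess x l = (\<Sum>e\<in>UNIV. l $ e * l $ e - of_int (\<epsilon> e) * l $ e)"
    if "l \<in> real_flows M" for l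
  proof -
    have "inner z l = 0" using z[of l] that span_flows by (simp add: real_inner_class.orthogonal_def)
    hence "inner x l = inner (\<chi> e. of_int (\<epsilon> e) / 2) l" by (simp add: u inner_add_left)
    thus ?thesis
      by (simp add: dist_excess_def inner_vec_def sum_subtractf sum_distrib_left algebra_simps)
  qed
  have terms: "0 \<le> l $ e * l $ e - of_int (\<epsilon> e) * l $ e \<and>
      (l $ e * l $ e - of_int (\<epsilon> e) * l $ e = 0 \<longleftrightarrow> l $ e = 0 \<or> l $ e = of_int (\<epsilon> e))"
    if "l \<in> integer_flows M" for l e
  proof -
    have "l $ e \<in> \<int>" using that by (simp add: integer_flows_def)
    moreover have "(of_int (\<epsilon> e) :: real) \<in> {-1, 0, 1}" using \<epsilon>[rule_format, of e] by auto
    ultimately show ?thesis using integer_unit_mult_le_square[of "l $ e" "of_int (\<epsilon> e)"] by linarith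
  qed
  have excess_zero: "dist_excess x l = 0 \<longleftrightarrow> (\<forall>e. l $ e = 0 \<or> l $ e = of_int (\<epsilon> e))"
    and excess_nonneg: "dist_excess x l \<ge> 0" if "l \<in> integer_flows M" for l
  proof -
    have lf: "l \<in> real_flows M" using that by (simp add: integer_flows_def)
    show "dist_excess x l \<ge> 0"
      unfolding excess[OF lf] using terms[OF that] by (intro sum_nonneg) blast
    show "dist_excess x l = 0 \<longleftrightarrow> (\<forall>e. l $ e = 0 \<or> l $ e = of_int (\<epsilon> e))"
      unfolding excess[OF lf] using terms[OF that] by (subst sum_nonneg_eq_0_iff) auto
  qed
  show thesis
  proof
    show "x \<in> voronoi_cell M 0" using x span_flows excess_nonneg voronoi_cell_zero_iff by blast
    show "nearest_flows M x = oriented_unit_flows M \<epsilon>"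
      using excess_zero by (auto simp: nearest_flows_def oriented_unit_flows_def)
  qed
qed

lemma strongly_connected_conforming_flow:
  fixes M :: "real^'e::finite^'r::finite"
  assumes sc: "(S, \<epsilon>) \<in> SC M" and eS: "e \<in> S"
  obtains y where "M *v y = 0" "conforms \<epsilon> y" "y $ e \<noteq> 0"
proof -
  have orient: "\<forall>e\<in>S. \<epsilon> e \<in> {-1, 1}" using sc by (auto simp: SC_def oriented_submatroid_def)
  obtain w :: "'e \<Rightarrow> int" where w: "\<forall>f\<in>S. w f \<ge> 0" "w e \<ge> 1"
    "(\<Sum>f\<in>S. of_int (w f * \<epsilon> f) *\<^sub>R column f M) = 0"
    using sc eS by (auto simp: SC_def strongly_connected_def)
  define y where "y = (\<chi> f. if f \<in> S then (of_int (w f * \<epsilon> f) :: real) else 0)"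
  show thesis
  proof
    have "M *v y = (\<Sum>f\<in>UNIV. y $ f *\<^sub>R column f M)"
      by (simp add: matrix_mult_sum scalar_mult_eq_scaleR)
    also have "\<dots> = (\<Sum>f\<in>S. of_int (w f * \<epsilon> f) *\<^sub>R column f M)"
      by (rule sum.mono_neutral_cong_right) (auto simp: y_def)
    finally show "M *v y = 0" using w(3) by simp
    show "conforms \<epsilon> y"
      unfolding conforms_def
    proof
      fix f
      show "y $ f = 0 \<or> sgn (y $ f) = of_int (\<epsilon> f)"
      proof (cases "f \<in> S \<and> w f \<noteq> 0")
        case True
        hence "w f > 0" using w(1) by force
        moreover have "\<epsilon> f = -1 \<or> \<epsilon> f = 1" using True orient by auto
        ultimately have "sgn (of_int (w f * \<epsilon> f) :: real) = of_int (\<epsilon> f)"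
          by (auto simp: sgn_mult)
        thus ?thesis using True by (simp add: y_def)
      qed (auto simp: y_def)
    qed
    show "y $ e \<noteq> 0" using eS w(2) orient by (auto simp: y_def)
  qed
qed

lemma strongly_connected_joint_support:
  fixes M :: "real^'e::finite^'r::finite"
  assumes TU: "totally_unimodular M" and sc: "(S, \<epsilon>) \<in> SC M"
  shows "joint_support (oriented_unit_flows M \<epsilon>) = S"
proof
  have orient: "\<forall>e. e \<notin> S \<longrightarrow> \<epsilon> e = 0" using sc by (auto simp: SC_def oriented_submatroid_def)
  show "joint_support (oriented_unit_flows M \<epsilon>) \<subseteq> S"
  proof
    fix e assume "e \<in> joint_support (oriented_unit_flows M \<epsilon>)"
    then obtain l where "l \<in> oriented_unit_flows M \<epsilon>" "l $ e \<noteq> 0" by (auto simp: joint_support_def)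
    hence "\<epsilon> e \<noteq> 0" by (auto simp: oriented_unit_flows_def)
    thus "e \<in> S" using orient by blast
  qed
  show "S \<subseteq> joint_support (oriented_unit_flows M \<epsilon>)"
  proof
    fix e assume "e \<in> S"
    then obtain y where yf: "M *v y = 0" and "conforms \<epsilon> y" and "y $ e \<noteq> 0"
      using strongly_connected_conforming_flow[OF sc] by blast
    hence "y \<in> span (oriented_unit_flows M \<epsilon>)" using conforming_flow_in_span[OF TU yf] by blast
    show "e \<in> joint_support (oriented_unit_flows M \<epsilon>)"
    proof (rule ccontr)
      assume "e \<notin> joint_support (oriented_unit_flows M \<epsilon>)"
      hence "oriented_unit_flows M \<epsilon> \<subseteq> {v. v $ e = 0}" by (auto simp: joint_support_def)
      moreover have "subspace {v :: real^'e. v $ e = 0}" by (simp add: subspace_def)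
      ultimately have "span (oriented_unit_flows M \<epsilon>) \<subseteq> {v. v $ e = 0}" by (rule span_minimal)
      thus False using \<open>y \<in> span (oriented_unit_flows M \<epsilon>)\<close> \<open>y $ e \<noteq> 0\<close> by auto
    qed
  qed
qed

lemma joint_orientation_oriented_unit_flows:
  assumes "\<forall>e. \<epsilon> e \<in> {-1, 0, 1}" and "\<forall>e. e \<notin> joint_support (oriented_unit_flows M \<epsilon>) \<longrightarrow> \<epsilon> e = 0"
  shows "joint_orientation (oriented_unit_flows M \<epsilon>) = \<epsilon>"
proof
  fix e
  show "joint_orientation (oriented_unit_flows M \<epsilon>) e = \<epsilon> e"
  proof (cases "e \<in> joint_support (oriented_unit_flows M \<epsilon>)")
    case True
    then obtain l where l: "l \<in> oriented_unit_flows M \<epsilon>" "l $ e \<noteq> 0" by (auto simp: joint_support_def)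
    hence "l $ e = of_int (\<epsilon> e)" by (auto simp: oriented_unit_flows_def)
    moreover have "\<not> (\<exists>m\<in>oriented_unit_flows M \<epsilon>. m $ e = 1)" if "\<epsilon> e = -1"
    proof
      assume "\<exists>m\<in>oriented_unit_flows M \<epsilon>. m $ e = 1"
      then obtain m where "m \<in> oriented_unit_flows M \<epsilon>" "m $ e = 1" by blast
      hence "m $ e = 0 \<or> m $ e = of_int (\<epsilon> e)" unfolding oriented_unit_flows_def by blast
      thus False using that \<open>m $ e = 1\<close> by simp
    qed
    ultimately show ?thesis using l assms(1)[rule_format, of e] by (auto simp: joint_orientation_def)
  qed (simp add: assms(2) joint_orientation_outside)
qed


section \<open>Faces of the Voronoi cell\<close>

lemma convex_voronoi_cell_zero: "convex (voronoi_cell M 0)"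
  unfolding convex_def
proof (intro ballI allI impI)
  fix x y and u v :: real
  assume x: "x \<in> voronoi_cell M 0" and y: "y \<in> voronoi_cell M 0" and uv: "0 \<le> u" "0 \<le> v" "u + v = 1"
  have "u *\<^sub>R x + v *\<^sub>R y \<in> real_flows M"
    using x y subspace_real_flows by (auto simp: voronoi_cell_zero_iff intro: subspace_add subspace_scale)
  moreover have "dist_excess (u *\<^sub>R x + v *\<^sub>R y) l \<ge> 0" if "l \<in> integer_flows M" for l
    using x y that uv dist_excess_affine[OF uv(3), of x y l] by (simp add: voronoi_cell_zero_iff)
  ultimately show "u *\<^sub>R x + v *\<^sub>R y \<in> voronoi_cell M 0" by (simp add: voronoi_cell_zero_iff)
qed

definition face_flows :: "real^'e^'r \<Rightarrow> (real^'e) set \<Rightarrow> (real^'e) set" where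
  "face_flows M F = {l \<in> integer_flows M. \<forall>x\<in>F. dist_excess x l = 0}"

lemma face_flows_eq_nearest_flows:
  assumes F: "F face_of voronoi_cell M 0" and x: "x \<in> rel_interior F"
  shows "face_flows M F = nearest_flows M x"
proof
  have xF: "x \<in> F" using x rel_interior_subset by blast
  show "face_flows M F \<subseteq> nearest_flows M x" using xF by (auto simp: face_flows_def nearest_flows_def)
  show "nearest_flows M x \<subseteq> face_flows M F"
  proof
    fix l assume l: "l \<in> nearest_flows M x"
    have li: "l \<in> integer_flows M" and l0: "dist_excess x l = 0" using l by (auto simp: nearest_flows_def)
    have FV: "F \<subseteq> voronoi_cell M 0" using F face_of_imp_subset by blast
    \<comment> \<open>the excess is affine along lines, nonnegative on F and zero at the relative interior point x\<close>
    have "dist_excess y l = 0" if y: "y \<in> F" for y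
    proof -
      obtain c where c: "c > 1" "(1 - c) *\<^sub>R y + c *\<^sub>R x \<in> F"
        using convex_rel_interior_iff[OF face_of_imp_convex[OF F]] x y by blast
      have "dist_excess ((1 - c) *\<^sub>R y + c *\<^sub>R x) l \<ge> 0" "dist_excess y l \<ge> 0"
        using c(2) y FV li by (auto simp: voronoi_cell_zero_iff)
      moreover have "dist_excess ((1 - c) *\<^sub>R y + c *\<^sub>R x) l = (1 - c) * dist_excess y l"
        using dist_excess_affine[of "1 - c" c y x l] l0 by simp
      ultimately show ?thesis using c(1) by (simp add: zero_le_mult_iff)
    qed
    thus "l \<in> face_flows M F" using li by (simp add: face_flows_def)
  qed
qed

text \<open>Near a point x of the cell only the finitely many unit flows matter, and those not nearest
  to x stay strictly farther than 0 by continuity.\<close>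

lemma voronoi_cell_locally_determined:
  fixes M :: "real^'e::finite^'r::finite"
  assumes TU: "totally_unimodular M" and x: "x \<in> voronoi_cell M 0"
  obtains r where "r > 0"
    "\<And>y. y \<in> real_flows M \<Longrightarrow> dist y x < r \<Longrightarrow> \<forall>l\<in>nearest_flows M x. dist_excess y l = 0
          \<Longrightarrow> y \<in> voronoi_cell M 0"
proof -
  have ev: "\<forall>d\<in>unit_flows M - nearest_flows M x. eventually (\<lambda>y. dist_excess y d > 0) (nhds x)"
  proof
    fix d assume d: "d \<in> unit_flows M - nearest_flows M x"
    hence pos: "dist_excess x d > 0"
      using x by (auto simp: voronoi_cell_zero_iff unit_flows_def nearest_flows_def order_less_le)
    have "((\<lambda>y. dist_excess y d) \<longlongrightarrow> dist_excess x d) (nhds x)"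
      unfolding dist_excess_def by (intro tendsto_intros filterlim_ident)
    from order_tendstoD(1)[OF this pos] show "eventually (\<lambda>y. dist_excess y d > 0) (nhds x)" .
  qed
  have "finite (unit_flows M - nearest_flows M x)" using finite_unit_flows by blast
  from eventually_ball_finite[OF this ev]
  have "eventually (\<lambda>y. \<forall>d\<in>unit_flows M - nearest_flows M x. dist_excess y d > 0) (nhds x)" .
  then obtain r where r: "r > 0"
    and far: "\<And>y. dist y x < r \<Longrightarrow> \<forall>d\<in>unit_flows M - nearest_flows M x. dist_excess y d > 0"
    unfolding eventually_nhds_metric by blast
  show thesis
  proof (rule that[OF r])
    fix y assume y: "y \<in> real_flows M" "dist y x < r" "\<forall>l\<in>nearest_flows M x. dist_excess y l = 0"
    show "y \<in> voronoi_cell M 0"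
    proof (rule voronoi_cell_zero_if_unit_flows[OF TU y(1)])
      fix d assume "d \<in> unit_flows M"
      thus "dist_excess y d \<ge> 0"
        using y(3) far[OF y(2)] by (cases "d \<in> nearest_flows M x") (auto simp: less_imp_le)
    qed
  qed
qed

lemma in_open_segment_extension:
  fixes x y :: "'a::real_vector"
  assumes "t > 0" and "x \<noteq> y"
  shows "x \<in> open_segment ((1 + t) *\<^sub>R x + (- t) *\<^sub>R y) y"
proof -
  define z where "z = (1 + t) *\<^sub>R x + (- t) *\<^sub>R y"
  define u where "u = t / (1 + t)"
  have u: "0 < u" "u < 1" "1 - u = 1 / (1 + t)" using assms(1) by (simp_all add: u_def field_simps)
  have "(1 - u) *\<^sub>R z + u *\<^sub>R y = (1 / (1 + t)) *\<^sub>R (z + t *\<^sub>R y)"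
    unfolding u(3) by (simp add: u_def scaleR_add_right)
  also have "z + t *\<^sub>R y = (1 + t) *\<^sub>R x" by (simp add: z_def)
  finally have "x = (1 - u) *\<^sub>R z + u *\<^sub>R y" using assms(1) by simp
  moreover have "z \<noteq> y"
  proof
    assume "z = y"
    hence "(1 + t) *\<^sub>R (x - y) = 0" by (simp add: z_def algebra_simps)
    thus False using assms by simp
  qed
  ultimately show ?thesis using u unfolding in_segment z_def by blast
qed

lemma face_eq_common_nearest:
  fixes M :: "real^'e::finite^'r::finite"
  assumes TU: "totally_unimodular M" and F: "F face_of voronoi_cell M 0" and x: "x \<in> rel_interior F"
  shows "F = {y \<in> voronoi_cell M 0. face_flows M F \<subseteq> nearest_flows M y}"
proof
  have FV: "F \<subseteq> voronoi_cell M 0" using F face_of_imp_subset by blast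
  show "F \<subseteq> {y \<in> voronoi_cell M 0. face_flows M F \<subseteq> nearest_flows M y}"
    using FV by (auto simp: face_flows_def nearest_flows_def)
  show "{y \<in> voronoi_cell M 0. face_flows M F \<subseteq> nearest_flows M y} \<subseteq> F"
  proof (safe)
    fix y assume yV: "y \<in> voronoi_cell M 0" and N: "face_flows M F \<subseteq> nearest_flows M y"
    have xF: "x \<in> F" using x rel_interior_subset by blast
    hence xV: "x \<in> voronoi_cell M 0" using FV by blast
    obtain r where r: "r > 0" and near: "\<And>z. z \<in> real_flows M \<Longrightarrow> dist z x < r \<Longrightarrow>
        \<forall>l\<in>nearest_flows M x. dist_excess z l = 0 \<Longrightarrow> z \<in> voronoi_cell M 0"
      using voronoi_cell_locally_determined[OF TU xV] by blast
    show "y \<in> F"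
    proof (cases "y = x")
      case False
      \<comment> \<open>prolong the segment from y through x slightly beyond x, staying in the cell\<close>
      define t where "t = r / (2 * norm (x - y))"
      define z where "z = (1 + t) *\<^sub>R x + (- t) *\<^sub>R y"
      have t: "t > 0" using r False by (simp add: t_def)
      have "z - x = t *\<^sub>R (x - y)" by (simp add: z_def algebra_simps)
      hence "dist z x = t * norm (x - y)" using t by (simp add: dist_norm)
      also have "\<dots> < r" using r False by (simp add: t_def)
      finally have "dist z x < r" .
      have "z \<in> real_flows M"
        using xV yV unfolding z_def voronoi_cell_zero_iff
        by (simp add: real_flows_def matrix_vector_right_distrib matrix_vector_mult_scaleR del: scaleR_minus_left)
      moreover have "\<forall>l\<in>nearest_flows M x. dist_excess z l = 0"
        using N face_flows_eq_nearest_flows[OF F x] dist_excess_affine[of "1 + t" "- t" x y]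
        by (auto simp: z_def nearest_flows_def)
      ultimately have "z \<in> voronoi_cell M 0" using near \<open>dist z x < r\<close> by blast
      moreover have "x \<in> open_segment z y"
        unfolding z_def using t False by (intro in_open_segment_extension) auto
      ultimately show ?thesis using F yV xF unfolding face_of_def by blast
    qed (use xF in simp)
  qed
qed


lemma dim_orthogonal_flows:
  fixes M :: "real^'e::finite^'r::finite"
  assumes "span N \<subseteq> real_flows M"
  shows "dim {v \<in> real_flows M. \<forall>l\<in>N. inner v l = 0} + dim (span N) = genus M"
proof -
  have "{v \<in> real_flows M. \<forall>l\<in>span N. real_inner_class.orthogonal l v} =
        {v \<in> real_flows M. \<forall>l\<in>N. inner v l = 0}"
  proof (intro Collect_cong conj_cong refl iffI ballI)
    fix v l assume "\<forall>l\<in>span N. real_inner_class.orthogonal l v" "l \<in> N"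
    thus "inner v l = 0" using span_base by (force simp: real_inner_class.orthogonal_def inner_commute)
  next
    fix v l assume "\<forall>l\<in>N. inner v l = 0" "l \<in> span N"
    thus "real_inner_class.orthogonal l v"
      using orthogonal_to_span[of l N v] by (simp add: real_inner_class.orthogonal_def inner_commute)
  qed
  thus ?thesis
    using dim_subspace_orthogonal_to_vectors[OF subspace_span subspace_real_flows assms]
    by (simp add: genus_def)
qed

lemma aff_dim_squeezed_by_subspace:
  fixes F :: "'a::euclidean_space set"
  assumes W: "subspace W" and r: "r > 0"
    and inner: "(+) a ` W \<inter> ball a r \<subseteq> F" and outer: "F \<subseteq> (+) a ` W"
  shows "aff_dim F = int (dim W)"
proof -
  have "aff_dim ((+) a ` W \<inter> ball a r) = aff_dim ((+) a ` W)"
  proof (rule aff_dim_convex_Int_open)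
    show "convex ((+) a ` W)" using W by (intro convex_translation subspace_imp_convex)
    have "a \<in> (+) a ` W" using subspace_0[OF W] by (metis add_0_right image_eqI)
    thus "(+) a ` W \<inter> ball a r \<noteq> {}" using r by auto
  qed simp
  thus ?thesis
    using aff_dim_subset[OF inner] aff_dim_subset[OF outer] aff_dim_translation_eq[of a W]
      aff_dim_subspace[OF W] by simp
qed

lemma aff_dim_face:
  fixes M :: "real^'e::finite^'r::finite"
  assumes TU: "totally_unimodular M" and F: "F face_of voronoi_cell M 0" and x: "x \<in> rel_interior F"
  shows "aff_dim F = int (dim {v \<in> real_flows M. \<forall>l\<in>nearest_flows M x. inner v l = 0})"
proof -
  define W where "W = {v \<in> real_flows M. \<forall>l\<in>nearest_flows M x. inner v l = 0}"
  have FV: "F \<subseteq> voronoi_cell M 0" using F face_of_imp_subset by blast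
  have xF: "x \<in> F" using x rel_interior_subset by blast
  hence xV: "x \<in> voronoi_cell M 0" using FV by blast
  have NF: "face_flows M F = nearest_flows M x" by (rule face_flows_eq_nearest_flows[OF F x])
  have subW: "subspace W"
    by (auto simp: subspace_def W_def real_flows_def matrix_vector_right_distrib matrix_vector_mult_scaleR
        inner_add_left)
  have excess_shift: "dist_excess (x + v) l = - 2 * inner v l" if "l \<in> nearest_flows M x" for v l
    using that dist_excess_translate[of x v l] by (simp add: nearest_flows_def)
  have "F \<subseteq> (+) x ` W"
  proof
    fix y assume y: "y \<in> F"
    have "y - x \<in> real_flows M"
      using xV y FV by (auto simp: voronoi_cell_zero_iff real_flows_def matrix_vector_mult_diff_distrib)
    moreover have "inner (y - x) l = 0" if "l \<in> nearest_flows M x" for l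
    proof -
      have "dist_excess y l = 0" using y that NF[symmetric] by (auto simp: face_flows_def)
      thus ?thesis using excess_shift[OF that, of "y - x"] by simp
    qed
    ultimately have "y - x \<in> W" by (simp add: W_def)
    thus "y \<in> (+) x ` W" by (metis add.commute diff_add_cancel image_eqI)
  qed
  moreover obtain r where r: "r > 0" and near: "\<And>y. y \<in> real_flows M \<Longrightarrow> dist y x < r \<Longrightarrow>
      \<forall>l\<in>nearest_flows M x. dist_excess y l = 0 \<Longrightarrow> y \<in> voronoi_cell M 0"
    using voronoi_cell_locally_determined[OF TU xV] by blast
  moreover have "(+) x ` W \<inter> ball x r \<subseteq> F"
  proof
    fix y assume "y \<in> (+) x ` W \<inter> ball x r"
    then obtain v where v: "v \<in> W" "y = x + v" "dist y x < r" by (auto simp: dist_commute)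
    have "y \<in> real_flows M"
      using xV v by (simp add: W_def voronoi_cell_zero_iff real_flows_def matrix_vector_right_distrib)
    moreover have zero: "\<forall>l\<in>nearest_flows M x. dist_excess y l = 0"
      using excess_shift v by (simp add: W_def)
    ultimately have "y \<in> voronoi_cell M 0" using near v(3) by blast
    moreover have "face_flows M F \<subseteq> nearest_flows M y"
      using NF zero by (auto simp: nearest_flows_def)
    ultimately show "y \<in> F" using face_eq_common_nearest[OF TU F x] by blast
  qed
  ultimately show ?thesis using aff_dim_squeezed_by_subspace[OF subW r] by (simp add: W_def)
qed

definition face_orientation :: "real^'e^'r \<Rightarrow> (real^'e) set \<Rightarrow> 'e set \<times> ('e \<Rightarrow> int)" where
  "face_orientation M F = (joint_support (face_flows M F), joint_orientation (face_flows M F))"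

lemma face_poset_rel_interior:
  assumes "F \<in> face_poset M"
  obtains x where "F face_of voronoi_cell M 0" "x \<in> rel_interior F" "x \<in> voronoi_cell M 0"
    "face_flows M F = nearest_flows M x"
proof -
  have F: "F face_of voronoi_cell M 0" "F \<noteq> {}" using assms by (auto simp: face_poset_def)
  then obtain x where x: "x \<in> rel_interior F"
    using rel_interior_eq_empty face_of_imp_convex by blast
  moreover have "x \<in> voronoi_cell M 0"
    using x rel_interior_subset face_of_imp_subset[OF F(1)] by blast
  ultimately show thesis using that F(1) face_flows_eq_nearest_flows[OF F(1) x] by blast
qed

lemma face_orientation_in_SC:
  fixes M :: "real^'e::finite^'r::finite"
  assumes TU: "totally_unimodular M" and F: "F \<in> face_poset M"
  shows "face_orientation M F \<in> SC M"
proof -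
  obtain x where xV: "x \<in> voronoi_cell M 0" and NF: "face_flows M F = nearest_flows M x"
    using face_poset_rel_interior[OF F] by blast
  define N where "N = face_flows M F"
  have orient: "of_int (joint_orientation N e) = l $ e" if "l \<in> N" "l $ e \<noteq> 0" for l e
    using joint_orientation_eq[OF TU xV _ that] NF by (simp add: N_def)
  have "oriented_submatroid (joint_support N, joint_orientation N)"
    unfolding oriented_submatroid_def fst_conv snd_conv
  proof (intro conjI ballI allI impI)
    fix e assume "e \<in> joint_support N"
    then obtain l where l: "l \<in> N" "l $ e \<noteq> 0" by (auto simp: joint_support_def)
    hence "joint_orientation N e \<noteq> 0" using orient by fastforce
    thus "joint_orientation N e \<in> {-1, 1}" using joint_orientation_range[of N e] by blast
  qed (rule joint_orientation_outside)
  \<comment> \<open>each nearest flow through e is itself a positive integer flow of the orientation\<close>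
  moreover have "strongly_connected M (joint_support N, joint_orientation N)"
    unfolding strongly_connected_def fst_conv snd_conv
  proof
    fix e assume "e \<in> joint_support N"
    then obtain l where l: "l \<in> N" "l $ e \<noteq> 0" by (auto simp: joint_support_def)
    define w where "w f = (if l $ f = 0 then 0 else (1::int))" for f
    have "(\<Sum>f\<in>joint_support N. of_int (w f * joint_orientation N f) *\<^sub>R column f M) =
        (\<Sum>f\<in>UNIV. l $ f *\<^sub>R column f M)"
    proof (rule sum.mono_neutral_cong_left)
      show "\<forall>f\<in>UNIV - joint_support N. l $ f *\<^sub>R column f M = 0" using l by (auto simp: joint_support_def)
      show "of_int (w f * joint_orientation N f) *\<^sub>R column f M = l $ f *\<^sub>R column f M" for f
        using orient[OF l(1), of f] by (cases "l $ f = 0") (simp_all add: w_def)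
    qed auto
    also have "\<dots> = M *v l" by (simp add: matrix_mult_sum scalar_mult_eq_scaleR)
    also have "\<dots> = 0" using l NF by (simp add: N_def nearest_flows_def integer_flows_def real_flows_def)
    finally show "\<exists>w :: 'e \<Rightarrow> int. (\<forall>f\<in>joint_support N. w f \<ge> 0) \<and> w e \<ge> 1 \<and>
        (\<Sum>f\<in>joint_support N. of_int (w f * joint_orientation N f) *\<^sub>R column f M) = 0"
      using l by (intro exI[of _ w]) (simp add: w_def)
  qed
  ultimately show ?thesis by (simp add: SC_def face_orientation_def N_def)
qed

lemma face_orientation_mono:
  fixes M :: "real^'e::finite^'r::finite"
  assumes TU: "totally_unimodular M" and F: "F \<in> face_poset M" and FG: "F \<subseteq> G"
  shows "sc_le (face_orientation M F) (face_orientation M G)"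
proof -
  obtain x where xV: "x \<in> voronoi_cell M 0" and NF: "face_flows M F = nearest_flows M x"
    using face_poset_rel_interior[OF F] by blast
  have sub: "face_flows M G \<subseteq> face_flows M F" using FG by (auto simp: face_flows_def)
  hence "joint_support (face_flows M G) \<subseteq> joint_support (face_flows M F)"
    by (auto simp: joint_support_def)
  moreover have "joint_orientation (face_flows M G) e = joint_orientation (face_flows M F) e"
    if e: "e \<in> joint_support (face_flows M G)" for e
  proof -
    obtain l where l: "l \<in> face_flows M G" "l $ e \<noteq> 0" using e by (auto simp: joint_support_def)
    have "of_int (joint_orientation (face_flows M G) e) = l $ e"
      using joint_orientation_eq[OF TU xV _ l] sub NF by blast
    moreover have "of_int (joint_orientation (face_flows M F) e) = l $ e"
      using joint_orientation_eq[OF TU xV _ _ l(2)] sub NF l(1) by blast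
    ultimately show ?thesis by simp
  qed
  ultimately show ?thesis by (simp add: sc_le_def face_orientation_def)
qed

lemma face_subset_if_sc_le:
  fixes M :: "real^'e::finite^'r::finite"
  assumes TU: "totally_unimodular M" and F: "F \<in> face_poset M" and G: "G \<in> face_poset M"
    and le: "sc_le (face_orientation M F) (face_orientation M G)"
  shows "F \<subseteq> G"
proof -
  obtain x where F': "F face_of voronoi_cell M 0" "x \<in> rel_interior F"
    and xV: "x \<in> voronoi_cell M 0" and NF: "face_flows M F = nearest_flows M x"
    using face_poset_rel_interior[OF F] by blast
  obtain y where G': "G face_of voronoi_cell M 0" "y \<in> rel_interior G"
    and yV: "y \<in> voronoi_cell M 0" and NG: "face_flows M G = nearest_flows M y"
    using face_poset_rel_interior[OF G] by blast
  let ?\<epsilon>F = "joint_orientation (face_flows M F)" and ?\<epsilon>G = "joint_orientation (face_flows M G)"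
  have agree: "\<forall>e\<in>joint_support (face_flows M G). ?\<epsilon>G e = ?\<epsilon>F e"
    using le by (simp add: sc_le_def face_orientation_def)
  have "face_flows M G \<subseteq> face_flows M F"
  proof
    fix l assume l: "l \<in> face_flows M G"
    hence "l \<in> oriented_unit_flows M ?\<epsilon>G"
      using nearest_flows_eq_oriented_unit_flows[OF TU yV] NG by simp
    hence li: "l \<in> integer_flows M" and lG: "\<forall>e. l $ e = 0 \<or> l $ e = of_int (?\<epsilon>G e)"
      by (auto simp: oriented_unit_flows_def)
    have "l $ e = 0 \<or> l $ e = of_int (?\<epsilon>F e)" for e
    proof (cases "l $ e = 0")
      case False
      hence "e \<in> joint_support (face_flows M G)" using l by (auto simp: joint_support_def)
      thus ?thesis using lG agree by metis
    qed simp
    hence "l \<in> oriented_unit_flows M ?\<epsilon>F" using li by (simp add: oriented_unit_flows_def)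
    thus "l \<in> face_flows M F"
      using nearest_flows_eq_oriented_unit_flows[OF TU xV] NF by simp
  qed
  hence "{z \<in> voronoi_cell M 0. face_flows M F \<subseteq> nearest_flows M z}
      \<subseteq> {z \<in> voronoi_cell M 0. face_flows M G \<subseteq> nearest_flows M z}" by blast
  thus ?thesis using face_eq_common_nearest[OF TU F'] face_eq_common_nearest[OF TU G'] by simp
qed

lemma face_of_common_nearest:
  assumes "D \<subseteq> integer_flows M" and "0 \<in> D"
  shows "{y \<in> voronoi_cell M 0. D \<subseteq> nearest_flows M y} face_of voronoi_cell M 0"
proof -
  \<comment> \<open>an intersection of faces cut out by the supporting hyperplanes of the bisector inequalities\<close>
  have eq: "{y \<in> voronoi_cell M 0. D \<subseteq> nearest_flows M y} =
      \<Inter> ((\<lambda>l. voronoi_cell M 0 \<inter> {y. inner (2 *\<^sub>R l) y = inner l l}) ` D)"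
    using assms by (auto simp: nearest_flows_def dist_excess_def inner_commute)
  show ?thesis
    unfolding eq
  proof (rule face_of_Inter)
    fix T assume "T \<in> (\<lambda>l. voronoi_cell M 0 \<inter> {y. inner (2 *\<^sub>R l) y = inner l l}) ` D"
    then obtain l where l: "l \<in> D" "T = voronoi_cell M 0 \<inter> {y. inner (2 *\<^sub>R l) y = inner l l}" by blast
    have "inner (2 *\<^sub>R l) y \<le> inner l l" if "y \<in> voronoi_cell M 0" for y
      using that l(1) assms(1) by (auto simp: voronoi_cell_zero_iff dist_excess_def inner_commute)
    thus "T face_of voronoi_cell M 0" unfolding l(2)
      by (intro face_of_Int_supporting_hyperplane_le convex_voronoi_cell_zero) auto
  qed (use assms in blast)
qed

lemma face_orientation_surj:
  fixes M :: "real^'e::finite^'r::finite"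
  assumes TU: "totally_unimodular M" and sc: "(S, \<epsilon>) \<in> SC M"
  shows "\<exists>G\<in>face_poset M. face_orientation M G = (S, \<epsilon>)"
proof -
  have S: "joint_support (oriented_unit_flows M \<epsilon>) = S"
    by (rule strongly_connected_joint_support[OF TU sc])
  have \<epsilon>: "\<forall>e. \<epsilon> e \<in> {-1, 0, 1}" "\<forall>e. e \<notin> S \<longrightarrow> \<epsilon> e = 0"
    using sc by (auto simp: SC_def oriented_submatroid_def)
  obtain x where xV: "x \<in> voronoi_cell M 0" and Nx: "nearest_flows M x = oriented_unit_flows M \<epsilon>"
    using exists_voronoi_point_with_nearest_flows[OF \<epsilon>(1)] by blast
  define D where "D = oriented_unit_flows M \<epsilon>"
  define G where "G = {y \<in> voronoi_cell M 0. D \<subseteq> nearest_flows M y}"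
  have D: "D \<subseteq> integer_flows M" "0 \<in> D" by (auto simp: D_def oriented_unit_flows_def zero_in_integer_flows)
  have "x \<in> G" using xV Nx by (simp add: G_def D_def)
  hence "G \<in> face_poset M" using face_of_common_nearest[OF D] by (auto simp: face_poset_def G_def)
  moreover have "face_flows M G = D"
  proof
    show "face_flows M G \<subseteq> D" using \<open>x \<in> G\<close> Nx by (auto simp: face_flows_def nearest_flows_def D_def)
    show "D \<subseteq> face_flows M G" using D by (auto simp: face_flows_def G_def nearest_flows_def)
  qed
  ultimately show ?thesis
    using S \<epsilon> joint_orientation_oriented_unit_flows[of \<epsilon> M]
    by (intro bexI[of _ G]) (auto simp: face_orientation_def D_def)
qed

lemma codim_face_eq_sub_genus:
  fixes M :: "real^'e::finite^'r::finite"
  assumes TU: "totally_unimodular M" and F: "F \<in> face_poset M"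
  shows "int (genus M) - aff_dim F = int (sub_genus M (face_orientation M F))"
proof -
  obtain x where F': "F face_of voronoi_cell M 0" "x \<in> rel_interior F"
    and xV: "x \<in> voronoi_cell M 0" and NF: "face_flows M F = nearest_flows M x"
    using face_poset_rel_interior[OF F] by blast
  have span: "span (nearest_flows M x) = support_flows M (joint_support (nearest_flows M x))"
    by (rule span_nearest_flows[OF TU xV])
  hence "span (nearest_flows M x) \<subseteq> real_flows M" by (auto simp: support_flows_def real_flows_def)
  from dim_orthogonal_flows[OF this] aff_dim_face[OF TU F'] span NF show ?thesis
    by (simp add: sub_genus_def face_orientation_def support_flows_def)
qed

theorem mainTheorem1:
  fixes M :: "real^'e::finite^'r::finite"
  assumes "totally_unimodular M"
  shows "\<exists>\<phi>. bij_betw \<phi> (face_poset M) (SC M) \<and>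
           (\<forall>F\<in>face_poset M. \<forall>G\<in>face_poset M. F \<subseteq> G \<longleftrightarrow> sc_le (\<phi> F) (\<phi> G)) \<and>
           (\<forall>F\<in>face_poset M. int (genus M) - aff_dim F = int (sub_genus M (\<phi> F)))"
proof (intro exI conjI ballI)
  show order: "F \<subseteq> G \<longleftrightarrow> sc_le (face_orientation M F) (face_orientation M G)"
    if "F \<in> face_poset M" "G \<in> face_poset M" for F G
    using face_orientation_mono[OF assms that(1)] face_subset_if_sc_le[OF assms that] by blast
  have "inj_on (face_orientation M) (face_poset M)"
    using order by (intro inj_onI) (metis sc_le_def subset_antisym order_refl)
  moreover have "face_orientation M ` face_poset M = SC M"
    using face_orientation_in_SC[OF assms] face_orientation_surj[OF assms] by force
  ultimately show "bij_betw (face_orientation M) (face_poset M) (SC M)" by (simp add: bij_betw_def)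
  show "int (genus M) - aff_dim F = int (sub_genus M (face_orientation M F))" if "F \<in> face_poset M" for F
    by (rule codim_face_eq_sub_genus[OF assms that])
qed

end
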